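(* Let $\{c_n\}_{n\in\mathbb Z}$ be complex numbers with $\{c_n\}_{n\ge0}\in NBVS$ and $\{c_n+c_{-n}\}_{n\ge0}\in NBVS$, and let $f(x)=\lim_{N\to\infty}\sum_{n=-N}^Nc_ne^{inx}$. Suppose $f\in C_{2\pi}$ (the limit exists for all $x$ and is continuous). Then there is a constant $K$ independent of $n$ such that for all $n\ge1$, $$\max_{k\ge1}k|c_{n+k}|\le KE_n(f)\quad\text{and}\quad\max_{k\ge1}k|c_{-n-k}|\le KE_n(f).$$
   Context: For $\theta_0\in[0,\pi/2)$ let $M(\theta_0)=\{z\in\mathbb C: |\arg z|\le\theta_0\}$ (with $0\in M(\theta_0)$). Write $\Delta c_n=c_n-c_{n+1}$. A complex sequence $\mathbf C=\{c_n\}$ belongs to $NBVS$ if there is $\theta_0\in[0,\pi/2)$ with $c_n\in M(\theta_0)$ for all $n\ge1$ and a constant $K(\mathbf C)>0$ such that $\sum_{n=m}^{2m}|\Delta c_n|\le K(\mathbf C)\big(|c_m|+|c_{2m}|\big)$ for all $m\ge1$. $C_{2\pi}$ is the space of continuous $2\pi$-periodic complex functions with $\|g\|=\max_x|g(x)|$; $E_n(f)$ is the best uniform approximation of $f$ by trigonometric polynomials $\sum_{k=-n}^na_ke^{ikx}$ of degree at most $n$. *)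

theory Defs
  imports "HOL-Analysis.Analysis"
begin

definition sector :: "real \<Rightarrow> complex set" where
  "sector \<theta>0 = {z. z = 0 \<or> \<bar>Arg z\<bar> \<le> \<theta>0}"

definition NBVS :: "(nat \<Rightarrow> complex) \<Rightarrow> bool" where
  "NBVS c \<longleftrightarrow>
     (\<exists>\<theta>0. 0 \<le> \<theta>0 \<and> \<theta>0 < pi / 2 \<and> (\<forall>n\<ge>1. c n \<in> sector \<theta>0)) \<and>
     (\<exists>K>0. \<forall>m\<ge>1. (\<Sum>n=m..2*m. cmod (c n - c (Suc n))) \<le> K * (cmod (c m) + cmod (c (2*m))))"

definition trig_poly :: "nat \<Rightarrow> (int \<Rightarrow> complex) \<Rightarrow> real \<Rightarrow> complex" where
  "trig_poly n a x = (\<Sum>k = -int n..int n. a k * exp (\<i> * of_int k * of_real x))"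

definition best_approx :: "nat \<Rightarrow> (real \<Rightarrow> complex) \<Rightarrow> real" where
  "best_approx n f = Inf {(SUP x. cmod (f x - trig_poly n a x)) | a. True}"

end

(*
  The series converges everywhere to the continuous function f, so Riemann's uniqueness argument
  shows that it is the Fourier series of f: the coefficients are bounded (convergence at 0, pi/2
  and pi/4 together with the NBVS condition), Riemann's function
  c_0 x^2/2 - sum_{n /= 0} c_n e^{inx} / n^2 has second symmetric derivative f, and Schwarz's
  lemma identifies it with a second antiderivative of f up to an affine function.

  For a trigonometric polynomial T of degree n and |p| >= n + k, integrating f - T against the
  Fejer-type kernel e^{-ipx} |sum_{b<k} e^{ibx}|^2 gives |sum_{a,b<k} c_{p+a-b}| <= k ||f - T||.
  As NBVS coefficients lie in a sector, these double sums dominate cos(theta_0) h sum_{j<h} |c_{p+j}|,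
  and the NBVS condition controls |c_{n+k}| by such block sums; hence k |c_{n+k}| <= K E_n(f).
  The negative indices follow from the same bound for c_n + c_{-n}.
*)
theory Submission
  imports Defs "HOL-Real_Asymp.Real_Asymp"
begin

abbreviation expi :: "int \<Rightarrow> real \<Rightarrow> complex" where
  "expi k x \<equiv> exp (\<i> * of_int k * of_real x)"

lemma expi_mult: "expi k x * expi l x = expi (k + l) x"
  by (simp add: exp_add[symmetric] algebra_simps)

lemma expi_add: "expi k (x + y) = expi k x * expi k y"
  by (simp add: exp_add[symmetric] algebra_simps)

lemma norm_expi: "cmod (expi k x) = 1"
  using norm_exp_i_times[of "of_int k * x"] by (simp add: mult.assoc)

lemma cnj_expi: "cnj (expi k x) = expi (- k) x"
  by (simp add: exp_cnj)

lemma expi_periodic: "expi k (x + 2 * pi * of_int m) = expi k x"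
proof -
  have "expi k (2 * pi * of_int m) = exp ((2 * of_int (k * m) * pi) * \<i>)"
    by (simp add: algebra_simps)
  also have "\<dots> = 1"
    by (rule exp_integer_2pi) simp
  finally show ?thesis
    by (simp only: expi_add) simp
qed

lemma expi_add_2pi: "expi k (y + 2 * pi) = expi k y"
  using expi_periodic[of k y 1] by simp

lemma expi_2pi: "expi k (2 * pi) = 1"
  using expi_periodic[of k 0 1] by simp

lemma has_vector_derivative_expi:
  "(expi k has_vector_derivative (\<i> * of_int k * expi k y)) (at y within S)"
  by (rule has_vector_derivative_real_field) (auto intro!: derivative_eq_intros)

lemma has_integral_expi:
  "(expi k has_integral (if k = 0 then of_real (2 * pi) else 0)) {0..2 * pi}"
proof (cases "k = 0")
  case True
  then show ?thesis
    using has_integral_const_real[of "1::complex" 0 "2 * pi"] by (simp add: scaleR_conv_of_real)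
next
  case False
  have "(expi k has_integral (expi k (2 * pi) / (\<i> * of_int k) - expi k 0 / (\<i> * of_int k))) {0..2 * pi}"
    by (rule fundamental_theorem_of_calculus)
       (use False in \<open>auto intro!: has_vector_derivative_real_field derivative_eq_intros\<close>)
  then show ?thesis
    using False by (simp only: expi_2pi) simp
qed

section \<open>Consequences of the NBVS condition\<close>

lemma cos_mult_norm_le_Re:
  assumes "z \<in> sector t" "0 \<le> t" "t < pi / 2"
  shows "cos t * cmod z \<le> Re z"
proof (cases "z = 0")
  case False
  then have "\<bar>Arg z\<bar> \<le> t"
    using assms(1) by (auto simp: sector_def)
  then have "cos t \<le> cos \<bar>Arg z\<bar>"
    using assms(2,3) by (intro cos_monotone_0_pi_le) auto
  also have "\<dots> = cos (Arg z)"
    by (simp add: abs_if)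
  also have "\<dots> = Re z / cmod z"
    using False by (rule cos_Arg)
  finally show ?thesis
    using False by (simp add: field_simps)
qed simp

lemma norm_le_dyadic_block:
  fixes e :: "nat \<Rightarrow> complex"
  assumes K: "\<forall>m\<ge>1. (\<Sum>n=m..2*m. cmod (e n - e (Suc n))) \<le> K * (cmod (e m) + cmod (e (2*m)))"
    and M: "1 \<le> M" "M \<le> m" "m \<le> 2 * M"
  shows "cmod (e m) \<le> (K + 1) * (cmod (e M) + cmod (e (2 * M)))"
proof -
  have "e M - e m = - (\<Sum>i=M..<m. e (Suc i) - e i)"
    using sum_Suc_diff'[OF M(2), of e] by simp
  also have "\<dots> = (\<Sum>i=M..<m. e i - e (Suc i))"
    by (simp add: sum_negf[symmetric])
  finally have "cmod (e M - e m) \<le> (\<Sum>i=M..<m. cmod (e i - e (Suc i)))"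
    by (metis norm_sum)
  also have "\<dots> \<le> (\<Sum>i=M..2*M. cmod (e i - e (Suc i)))"
    using M by (intro sum_mono2) auto
  also have "\<dots> \<le> K * (cmod (e M) + cmod (e (2*M)))"
    using K M by auto
  finally have "cmod (e M - e m) \<le> K * (cmod (e M) + cmod (e (2*M)))" .
  moreover have "cmod (e m) \<le> cmod (e M) + cmod (e M - e m)"
    using norm_triangle_ineq2[of "e m" "e M"] norm_minus_commute[of "e m" "e M"] by linarith
  moreover have "(K + 1) * (cmod (e M) + cmod (e (2 * M))) =
      cmod (e M) + K * (cmod (e M) + cmod (e (2*M))) + cmod (e (2 * M))"
    by (simp add: algebra_simps)
  ultimately show ?thesis
    using norm_ge_zero[of "e (2 * M)"] by linarith
qed

lemma sum_even_le:
  fixes g :: "nat \<Rightarrow> real"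
  assumes "\<And>j. 0 \<le> g j"
  shows "(\<Sum>j<h. g (2 * j)) \<le> (\<Sum>j<2 * h. g j)"
proof (induction h)
  case (Suc h)
  have "(\<Sum>j<2 * Suc h. g j) = (\<Sum>j<2 * h. g j) + g (2 * h) + g (Suc (2 * h))"
    by (simp add: mult_2)
  then show ?case
    using Suc assms[of "Suc (2 * h)"] by simp
qed simp

lemma cos_mult_sum_norm_le_fejer_sum:
  fixes e :: "nat \<Rightarrow> complex"
  assumes sector: "\<And>j. 1 \<le> j \<Longrightarrow> e j \<in> sector t" "0 \<le> t" "t < pi / 2"
    and p: "2 * h \<le> p"
  shows "cos t * (real h * (\<Sum>j<h. cmod (e (p + j)))) \<le> cmod (\<Sum>a<2*h. \<Sum>b<2*h. e (p + a - b))"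
proof -
  have "real h * (\<Sum>j<h. cmod (e (p + j))) = (\<Sum>b<h. \<Sum>j<h. cmod (e (p + j)))"
    by simp
  also have "\<dots> \<le> (\<Sum>b<h. \<Sum>a<2*h. cmod (e (p + a - b)))"
  proof (rule sum_mono)
    fix b assume b: "b \<in> {..<h}"
    have "(\<Sum>j<h. cmod (e (p + j))) = (\<Sum>a\<in>(\<lambda>j. j + b) ` {..<h}. cmod (e (p + a - b)))"
      by (subst sum.reindex) (auto simp: inj_on_def)
    also have "\<dots> \<le> (\<Sum>a<2*h. cmod (e (p + a - b)))"
      using b by (intro sum_mono2) auto
    finally show "(\<Sum>j<h. cmod (e (p + j))) \<le> (\<Sum>a<2*h. cmod (e (p + a - b)))" .
  qed
  also have "\<dots> \<le> (\<Sum>b<2*h. \<Sum>a<2*h. cmod (e (p + a - b)))"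
    by (intro sum_mono2) (auto intro: sum_nonneg)
  also have "\<dots> = (\<Sum>a<2*h. \<Sum>b<2*h. cmod (e (p + a - b)))"
    by (rule sum.swap)
  finally have "cos t * (real h * (\<Sum>j<h. cmod (e (p + j))))
      \<le> cos t * (\<Sum>a<2*h. \<Sum>b<2*h. cmod (e (p + a - b)))"
    using sector(2,3) by (intro mult_left_mono cos_ge_zero) auto
  also have "\<dots> = (\<Sum>a<2*h. \<Sum>b<2*h. cos t * cmod (e (p + a - b)))"
    by (simp add: sum_distrib_left)
  also have "\<dots> \<le> (\<Sum>a<2*h. \<Sum>b<2*h. Re (e (p + a - b)))"
    using p sector by (intro sum_mono cos_mult_norm_le_Re) auto
  also have "\<dots> = Re (\<Sum>a<2*h. \<Sum>b<2*h. e (p + a - b))"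
    by simp
  also have "\<dots> \<le> cmod (\<Sum>a<2*h. \<Sum>b<2*h. e (p + a - b))"
    by (rule complex_Re_le_cmod)
  finally show ?thesis .
qed

lemma mult_norm_le_block_sums:
  fixes e :: "nat \<Rightarrow> complex"
  assumes K: "\<forall>m\<ge>1. (\<Sum>n=m..2*m. cmod (e n - e (Suc n))) \<le> K * (cmod (e m) + cmod (e (2*m)))"
    and "0 \<le> K" and h: "1 \<le> h" "h \<le> m" "2 * h \<le> m + 2"
  shows "real h * cmod (e m)
           \<le> (K + 1) * ((\<Sum>j<h. cmod (e (m + 1 - h + j))) + (\<Sum>j<2 * h. cmod (e (2 * (m + 1 - h) + j))))"
proof -
  have "real h * cmod (e m) = (\<Sum>j<h. cmod (e m))"
    by simp
  also have "\<dots> \<le> (\<Sum>j<h. (K + 1) * (cmod (e (m + 1 - h + j)) + cmod (e (2 * (m + 1 - h) + 2 * j))))"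
  proof (rule sum_mono)
    fix j assume "j \<in> {..<h}"
    then have "cmod (e m) \<le> (K + 1) * (cmod (e (m + 1 - h + j)) + cmod (e (2 * (m + 1 - h + j))))"
      using h by (intro norm_le_dyadic_block[OF K]) auto
    then show "cmod (e m) \<le> (K + 1) * (cmod (e (m + 1 - h + j)) + cmod (e (2 * (m + 1 - h) + 2 * j)))"
      by (simp add: algebra_simps)
  qed
  also have "\<dots> = (K + 1) * ((\<Sum>j<h. cmod (e (m + 1 - h + j))) + (\<Sum>j<h. cmod (e (2 * (m + 1 - h) + 2 * j))))"
    by (simp only: sum.distrib[symmetric] sum_distrib_left)
  also have "\<dots> \<le> (K + 1) * ((\<Sum>j<h. cmod (e (m + 1 - h + j))) + (\<Sum>j<2 * h. cmod (e (2 * (m + 1 - h) + j))))"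
    using \<open>0 \<le> K\<close> sum_even_le[where g = "\<lambda>j. cmod (e (2 * (m + 1 - h) + j))"] by (simp add: mult_left_mono)
  finally show ?thesis .
qed

lemma mult_norm_le_of_block_bound:
  fixes e :: "nat \<Rightarrow> complex"
  assumes K: "\<forall>m\<ge>1. (\<Sum>n=m..2*m. cmod (e n - e (Suc n))) \<le> K * (cmod (e m) + cmod (e (2*m)))"
    and "0 \<le> K" and block: "\<And>h p. 1 \<le> h \<Longrightarrow> n + 2 * h \<le> p \<Longrightarrow> (\<Sum>j<h. cmod (e (p + j))) \<le> W"
    and "2 \<le> k"
  shows "real k * cmod (e (n + k)) \<le> 8 * (K + 1) * W"
proof -
  define h where "h = (k - 2) div 3 + 1"
  have h: "1 \<le> h" "3 * h \<le> k + 1" "k \<le> 4 * h"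
    unfolding h_def using \<open>2 \<le> k\<close> by auto
  have "real k * cmod (e (n + k)) \<le> 4 * (real h * cmod (e (n + k)))"
    using h(3) by (simp add: mult_right_mono flip: mult.assoc of_nat_le_iff)
  also have "\<dots> \<le> 4 * ((K + 1) * (W + W))"
    using h \<open>0 \<le> K\<close> by (intro mult_left_mono order.trans[OF mult_norm_le_block_sums[OF K]] add_mono block) auto
  finally show ?thesis
    by (simp add: algebra_simps)
qed

lemma NBVS_norm_le_of_fejer_sums:
  fixes e :: "nat \<Rightarrow> complex" and E :: "nat \<Rightarrow> real"
  assumes "NBVS e"
    and fejer: "\<And>n k p. 1 \<le> n \<Longrightarrow> 1 \<le> k \<Longrightarrow> n + k \<le> p \<Longrightarrow>
                  cmod (\<Sum>a<k. \<Sum>b<k. e (p + a - b)) \<le> real k * E n"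
  obtains C where "0 \<le> C" and "\<And>n k. 1 \<le> n \<Longrightarrow> 1 \<le> k \<Longrightarrow> real k * cmod (e (n + k)) \<le> C * E n"
proof -
  obtain t where t: "0 \<le> t" "t < pi / 2" "\<And>j. 1 \<le> j \<Longrightarrow> e j \<in> sector t"
    using assms unfolding NBVS_def by blast
  obtain K where K0: "K > 0"
    and K: "\<forall>m\<ge>1. (\<Sum>n=m..2*m. cmod (e n - e (Suc n))) \<le> K * (cmod (e m) + cmod (e (2*m)))"
    using assms unfolding NBVS_def by blast
  have cos_t: "0 < cos t" "cos t \<le> 16 * (K + 1)"
    using t K0 by (auto intro!: cos_gt_zero_pi order.trans[OF cos_le_one])
  show ?thesis
  proof (rule that)
    show "0 \<le> 16 * (K + 1) / cos t"
      using cos_t K0 by simp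
    fix n k :: nat
    assume n: "1 \<le> n" and k: "1 \<le> k"
    have single: "cmod (e (n + 1)) \<le> E n"
      using fejer[OF n, of 1 "n + 1"] by simp
    have block: "(\<Sum>j<h. cmod (e (p + j))) \<le> 2 * E n / cos t" if h: "1 \<le> h" and p: "n + 2 * h \<le> p" for h p
    proof -
      have "cos t * (real h * (\<Sum>j<h. cmod (e (p + j)))) \<le> real (2 * h) * E n"
        using h p t n by (intro order.trans[OF cos_mult_sum_norm_le_fejer_sum[of e t h p] fejer]) auto
      then have "cos t * (\<Sum>j<h. cmod (e (p + j))) \<le> 2 * E n"
        using h by (simp add: algebra_simps)
      then show ?thesis
        using cos_t by (simp add: field_simps)
    qed
    show "real k * cmod (e (n + k)) \<le> 16 * (K + 1) / cos t * E n"
    proof (cases "k = 1")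
      case True
      have "1 \<le> 16 * (K + 1) / cos t"
        using cos_t by (simp add: le_divide_eq)
      then show ?thesis
        using True single mult_right_mono[of 1 _ "E n"] order.trans[OF norm_ge_zero single] by force
    next
      case False
      then have "real k * cmod (e (n + k)) \<le> 8 * (K + 1) * (2 * E n / cos t)"
        using k K0 by (intro mult_norm_le_of_block_bound[OF K _ block]) auto
      then show ?thesis
        by (simp add: field_simps)
    qed
  qed
qed

section \<open>Boundedness of the coefficients\<close>

definition sym_term :: "(int \<Rightarrow> complex) \<Rightarrow> real \<Rightarrow> nat \<Rightarrow> complex" where
  "sym_term c x n = c (int n) * expi (int n) x + c (- int n) * expi (- int n) x"

lemma sum_symmetric_interval:
  fixes g :: "int \<Rightarrow> 'a::comm_monoid_add"
  shows "(\<Sum>n = - int N..int N. g n) = (\<Sum>n\<le>N. if n = 0 then g 0 else g (int n) + g (- int n))"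
proof (induction N)
  case (Suc N)
  have "{- int (Suc N)..int (Suc N)} = insert (int (Suc N)) (insert (- int (Suc N)) {- int N..int N})"
    by auto
  then show ?case
    using Suc by (simp add: ac_simps)
qed simp

lemma trig_partial_sum_eq:
  "(\<Sum>n = - int N..int N. c n * expi n x) = (\<Sum>n\<le>N. if n = 0 then c 0 else sym_term c x n)"
  unfolding sum_symmetric_interval sym_term_def by (intro sum.cong) auto

lemma sym_term_tendsto_zero:
  assumes "(\<lambda>N. \<Sum>n = - int N..int N. c n * expi n x) \<longlonglongrightarrow> s"
  shows "sym_term c x \<longlonglongrightarrow> 0"
proof -
  let ?S = "\<lambda>N. \<Sum>n = - int N..int N. c n * expi n x"
  have "(\<lambda>N. ?S (Suc N) - ?S N) \<longlonglongrightarrow> s - s"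
    by (rule tendsto_diff[OF LIMSEQ_Suc[OF assms] assms])
  moreover have "?S (Suc N) - ?S N = sym_term c x (Suc N)" for N
    by (simp only: trig_partial_sum_eq sum.atMost_Suc) simp
  ultimately show ?thesis
    by (auto intro: LIMSEQ_imp_Suc)
qed

lemma bounded_sym_term:
  assumes "(\<lambda>N. \<Sum>n = - int N..int N. c n * expi n x) \<longlonglongrightarrow> s"
  obtains W where "\<And>n. cmod (sym_term c x n) \<le> W"
  using convergent_imp_Bseq[OF convergentI[OF sym_term_tendsto_zero[OF assms]]]
  unfolding Bseq_def by blast

lemma bounded_coeff_mult_sin:
  assumes "(\<lambda>N. \<Sum>n = - int N..int N. c n * expi n x) \<longlonglongrightarrow> s"
    and "(\<lambda>N. \<Sum>n = - int N..int N. c n * expi n 0) \<longlonglongrightarrow> s0"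
  obtains W where "\<And>n. cmod (c (int n)) * (2 * \<bar>sin (real n * x)\<bar>) \<le> W"
proof -
  obtain Wx where Wx: "\<And>n. cmod (sym_term c x n) \<le> Wx"
    using bounded_sym_term[OF assms(1)] by blast
  obtain W0 where W0: "\<And>n. cmod (sym_term c 0 n) \<le> W0"
    using bounded_sym_term[OF assms(2)] by blast
  show ?thesis
  proof (rule that)
    fix n
    have "complex_of_real (sin (real n * x)) = sin (complex_of_real (real n * x))"
      by (simp only: sin_of_real)
    also have "\<dots> = (expi (int n) x - expi (- int n) x) / (2 * \<i>)"
      by (simp add: sin_exp_eq mult.assoc)
    finally have "expi (int n) x - expi (- int n) x = 2 * \<i> * of_real (sin (real n * x))"
      by (simp add: field_simps)
    then have eq: "c (int n) * (2 * \<i> * of_real (sin (real n * x)))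
        = sym_term c x n - sym_term c 0 n * expi (- int n) x"
      unfolding sym_term_def by (simp add: algebra_simps)
    have "cmod (c (int n)) * (2 * \<bar>sin (real n * x)\<bar>) = cmod (c (int n) * (2 * \<i> * of_real (sin (real n * x))))"
      by (simp add: norm_mult)
    also have "\<dots> = cmod (sym_term c x n - sym_term c 0 n * expi (- int n) x)"
      by (simp only: eq)
    also have "\<dots> \<le> Wx + W0"
      by (rule order.trans[OF norm_triangle_ineq4]) (simp add: norm_mult norm_expi Wx W0 add_mono)
    finally show "cmod (c (int n)) * (2 * \<bar>sin (real n * x)\<bar>) \<le> Wx + W0" .
  qed
qed

lemma abs_sin_odd_mult_pi_half: "odd m \<Longrightarrow> \<bar>sin (real m * pi / 2)\<bar> = 1"
proof -
  assume "odd m"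
  then obtain l where "m = 2 * l + 1"
    by (metis oddE)
  then have "real m * pi / 2 = real l * pi + pi / 2"
    by (simp add: field_simps)
  then have "sin (real m * pi / 2) = sin (real l * pi + pi / 2)"
    by (simp only:)
  also have "\<dots> = (-1) ^ l"
    by (simp add: sin_add)
  finally have "sin (real m * pi / 2) = (-1) ^ l" .
  then show ?thesis
    by simp
qed

lemma bounded_pos_coeffs_of_convergent_trig_series:
  assumes nbvs: "NBVS (\<lambda>n. c (int n))"
    and conv: "\<And>x. (\<lambda>N. \<Sum>n = - int N..int N. c n * expi n x) \<longlonglongrightarrow> f x"
  obtains B where "\<And>j. 1 \<le> j \<Longrightarrow> cmod (c (int j)) \<le> B"
proof -
  obtain K where K0: "K > 0" and K: "\<forall>m\<ge>1. (\<Sum>n=m..2*m. cmod (c (int n) - c (int (Suc n))))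
      \<le> K * (cmod (c (int m)) + cmod (c (int (2*m))))"
    using nbvs unfolding NBVS_def by blast
  obtain W1 where W1: "\<And>n. cmod (c (int n)) * (2 * \<bar>sin (real n * (pi / 2))\<bar>) \<le> W1"
    using bounded_coeff_mult_sin[OF conv[of "pi / 2"] conv[of 0]] by blast
  obtain W2 where W2: "\<And>n. cmod (c (int n)) * (2 * \<bar>sin (real n * (pi / 4))\<bar>) \<le> W2"
    using bounded_coeff_mult_sin[OF conv[of "pi / 4"] conv[of 0]] by blast
  have odd1: "cmod (c (int m)) \<le> W1 / 2" if "odd m" for m
    using W1[of m] abs_sin_odd_mult_pi_half[OF that] by simp
  have odd2: "cmod (c (int (2 * m))) \<le> W2 / 2" if "odd m" for m
    using W2[of "2 * m"] abs_sin_odd_mult_pi_half[OF that] by (simp add: mult.commute)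
  show ?thesis
  proof (rule that)
    fix j :: nat
    assume "1 \<le> j"
    define m where "m = (if odd j then j else j - 1)"
    have m: "odd m" "1 \<le> m" "m \<le> j" "j \<le> 2 * m"
      unfolding m_def using \<open>1 \<le> j\<close> by (auto elim: oddE evenE)
    have "cmod (c (int j)) \<le> (K + 1) * (cmod (c (int m)) + cmod (c (int (2 * m))))"
      using norm_le_dyadic_block[where e = "\<lambda>n. c (int n)", OF K m(2-4)] by simp
    also have "\<dots> \<le> (K + 1) * (W1 / 2 + W2 / 2)"
      using K0 odd1[OF m(1)] odd2[OF m(1)] by (intro mult_left_mono add_mono) auto
    finally show "cmod (c (int j)) \<le> (K + 1) * (W1 / 2 + W2 / 2)" .
  qed
qed

lemma bounded_coeffs_of_convergent_trig_series:
  assumes nbvs: "NBVS (\<lambda>n. c (int n))"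
    and conv: "\<And>x. (\<lambda>N. \<Sum>n = - int N..int N. c n * expi n x) \<longlonglongrightarrow> f x"
  obtains B where "\<And>j. cmod (c j) \<le> B"
proof -
  obtain Bp where Bp: "\<And>j. 1 \<le> j \<Longrightarrow> cmod (c (int j)) \<le> Bp"
    using bounded_pos_coeffs_of_convergent_trig_series[OF nbvs conv] by blast
  obtain W0 where W0: "\<And>n. cmod (sym_term c 0 n) \<le> W0"
    using bounded_sym_term[OF conv[of 0]] by blast
  have "0 \<le> W0"
    using W0[of 0] norm_ge_zero order.trans by blast
  show ?thesis
  proof (rule that)
    fix j :: int
    show "cmod (c j) \<le> max (cmod (c 0)) (W0 + Bp)"
    proof (cases j rule: int_cases3)
      case (pos n)
      then show ?thesis
        using Bp[of n] \<open>0 \<le> W0\<close> by simp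
    next
      case (neg n)
      then have "c j = sym_term c 0 n - c (int n)"
        by (simp add: sym_term_def)
      then have "cmod (c j) \<le> W0 + Bp"
        using norm_triangle_ineq4[of "sym_term c 0 n" "c (int n)"] W0[of n] Bp[of n] neg(2) by simp
      then show ?thesis
        by simp
    qed simp
  qed
qed

section \<open>Schwarz's lemma\<close>

definition second_sym_quotient :: "(real \<Rightarrow> 'a::real_normed_field) \<Rightarrow> real \<Rightarrow> real \<Rightarrow> 'a" where
  "second_sym_quotient G x = (\<lambda>h. (G (x + h) + G (x - h) - 2 * G x) / of_real (h^2))"

lemma eventually_second_sym_quotient_nonpos_at_max:
  fixes K :: "real \<Rightarrow> real"
  assumes "a < x" "x < b" and max: "\<And>y. y \<in> {a..b} \<Longrightarrow> K y \<le> K x"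
  shows "\<forall>\<^sub>F h in at 0. second_sym_quotient K x h \<le> 0"
proof -
  have "second_sym_quotient K x h \<le> 0" if "dist h 0 < min (x - a) (b - x)" for h
  proof -
    have "x + h \<in> {a..b}" "x - h \<in> {a..b}"
      using that unfolding dist_real_def by auto
    then have "K (x + h) + K (x - h) - 2 * K x \<le> 0"
      using max[of "x + h"] max[of "x - h"] by linarith
    then show ?thesis
      unfolding second_sym_quotient_def by (simp add: divide_nonpos_nonneg)
  qed
  moreover have "min (x - a) (b - x) > 0"
    using assms(1,2) by simp
  ultimately show ?thesis
    unfolding eventually_at by blast
qed

lemma schwarz_nonpos:
  fixes H :: "real \<Rightarrow> real"
  assumes ab: "a < b" and cont: "continuous_on {a..b} H" and "H a = 0" "H b = 0"
    and quotient: "\<And>x. a < x \<Longrightarrow> x < b \<Longrightarrow> (second_sym_quotient H x \<longlongrightarrow> 0) (at 0)"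
    and x0: "x0 \<in> {a..b}"
  shows "H x0 \<le> 0"
proof (rule ccontr)
  assume "\<not> H x0 \<le> 0"
  then have H0: "H x0 > 0"
    by simp
  \<comment> \<open>Adding \<open>e (y - a) (y - b)\<close> keeps a positive interior maximum, where all quotients are \<open>\<le> 0\<close>,
     but raises their limit to \<open>2 e > 0\<close>.\<close>
  define e where "e = H x0 / (2 * (b - a)^2)"
  have e: "e > 0"
    unfolding e_def using H0 ab by simp
  define K where "K y = H y + e * ((y - a) * (y - b))" for y
  have "continuous_on {a..b} K"
    unfolding K_def by (intro continuous_intros cont)
  moreover have "{a..b} \<noteq> {}"
    using ab by simp
  ultimately obtain xm where xm: "xm \<in> {a..b}" "\<And>y. y \<in> {a..b} \<Longrightarrow> K y \<le> K xm"
    using continuous_attains_sup[OF compact_Icc] by blast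
  have "e * ((x0 - a) * (b - x0)) \<le> e * ((b - a) * (b - a))"
    using x0 e by (intro mult_left_mono mult_mono) auto
  also have "\<dots> = H x0 / 2"
    unfolding e_def power2_eq_square using ab by simp
  finally have "K x0 > 0"
    unfolding K_def using H0 by (simp add: algebra_simps)
  then have "K xm > 0"
    using xm(2)[OF x0] by simp
  then have "xm \<noteq> a" "xm \<noteq> b"
    using assms(3,4) by (auto simp: K_def)
  then have xm_interior: "a < xm" "xm < b"
    using xm(1) by auto
  have "second_sym_quotient K xm h = second_sym_quotient H xm h + 2 * e" if "h \<noteq> 0" for h
    using that unfolding second_sym_quotient_def K_def by (simp add: field_simps power2_eq_square)
  then have "\<forall>\<^sub>F h in at 0. second_sym_quotient H xm h + 2 * e = second_sym_quotient K xm h"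
    by (simp add: eventually_at_filter)
  moreover have "((\<lambda>h. second_sym_quotient H xm h + 2 * e) \<longlongrightarrow> 0 + 2 * e) (at 0)"
    by (intro tendsto_intros quotient xm_interior)
  ultimately have lim: "(second_sym_quotient K xm \<longlongrightarrow> 2 * e) (at 0)"
    by (simp add: Lim_transform_eventually)
  have "\<forall>\<^sub>F h in at 0. second_sym_quotient K xm h \<le> 0"
    using xm_interior xm(2) by (rule eventually_second_sym_quotient_nonpos_at_max)
  then have "2 * e \<le> 0"
    using tendsto_upperbound[OF lim] by simp
  then show False
    using e by simp
qed

lemma schwarz_affine_real:
  fixes G :: "real \<Rightarrow> real"
  assumes ab: "a < b" and cont: "continuous_on {a..b} G"
    and quotient: "\<And>x. a < x \<Longrightarrow> x < b \<Longrightarrow> (second_sym_quotient G x \<longlongrightarrow> 0) (at 0)"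
    and x0: "x0 \<in> {a..b}"
  shows "G x0 = G a + (x0 - a) / (b - a) * (G b - G a)"
proof -
  define H where "H y = G y - (G a + (y - a) / (b - a) * (G b - G a))" for y
  have "H (x + h) + H (x - h) - 2 * H x = G (x + h) + G (x - h) - 2 * G x" for x h
  proof -
    have "(x + h - a) / (b - a) + (x - h - a) / (b - a) = 2 * ((x - a) / (b - a))"
      by (simp flip: add_divide_distrib)
    then have "(x + h - a) / (b - a) * (G b - G a) + (x - h - a) / (b - a) * (G b - G a)
        = 2 * ((x - a) / (b - a) * (G b - G a))"
      by (metis distrib_right mult.assoc)
    then show ?thesis
      unfolding H_def by (simp add: algebra_simps)
  qed
  then have same_quotient: "second_sym_quotient H x = second_sym_quotient G x" for x
    by (simp add: second_sym_quotient_def)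
  have H_cont: "continuous_on {a..b} H"
    unfolding H_def using ab by (intro continuous_intros cont) auto
  have H_ends: "H a = 0" "H b = 0"
    unfolding H_def using ab by simp_all
  have "H x0 \<le> 0"
    using schwarz_nonpos[OF ab H_cont H_ends _ x0] quotient by (simp add: same_quotient)
  moreover have "- H x0 \<le> 0"
  proof (rule schwarz_nonpos[OF ab _ _ _ _ x0])
    show "continuous_on {a..b} (\<lambda>y. - H y)"
      by (intro continuous_intros H_cont)
    fix x
    assume "a < x" "x < b"
    have "second_sym_quotient (\<lambda>y. - H y) x = (\<lambda>h. - second_sym_quotient H x h)"
      unfolding second_sym_quotient_def by (simp add: minus_divide_left algebra_simps)
    then show "(second_sym_quotient (\<lambda>y. - H y) x \<longlongrightarrow> 0) (at 0)"
      using tendsto_minus[OF quotient[OF \<open>a < x\<close> \<open>x < b\<close>]] by (simp add: same_quotient)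
  qed (simp_all add: H_ends)
  ultimately show ?thesis
    unfolding H_def by simp
qed

lemma schwarz_affine:
  fixes G :: "real \<Rightarrow> complex"
  assumes ab: "a < b" and cont: "continuous_on {a..b} G"
    and quotient: "\<And>x. a < x \<Longrightarrow> x < b \<Longrightarrow> (second_sym_quotient G x \<longlongrightarrow> 0) (at 0)"
    and x0: "x0 \<in> {a..b}"
  shows "G x0 = G a + of_real ((x0 - a) / (b - a)) * (G b - G a)"
proof -
  have "Re (G x0) = Re (G a) + (x0 - a) / (b - a) * (Re (G b) - Re (G a))"
  proof (rule schwarz_affine_real[OF ab _ _ x0])
    fix x
    assume "a < x" "x < b"
    from tendsto_Re[OF quotient[OF this]]
    show "(second_sym_quotient (\<lambda>y. Re (G y)) x \<longlongrightarrow> 0) (at 0)"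
      by (simp add: second_sym_quotient_def)
  qed (intro continuous_intros cont)
  moreover have "Im (G x0) = Im (G a) + (x0 - a) / (b - a) * (Im (G b) - Im (G a))"
  proof (rule schwarz_affine_real[OF ab _ _ x0])
    fix x
    assume "a < x" "x < b"
    from tendsto_Im[OF quotient[OF this]]
    show "(second_sym_quotient (\<lambda>y. Im (G y)) x \<longlongrightarrow> 0) (at 0)"
      by (simp add: second_sym_quotient_def)
  qed (intro continuous_intros cont)
  ultimately show ?thesis
    by (intro complex_eqI) auto
qed

lemma has_vector_derivative_symmetric_sum:
  fixes \<phi> :: "real \<Rightarrow> 'a::real_normed_vector"
  assumes "(\<phi> has_vector_derivative \<phi>' (x + s)) (at (x + s))"
    and "(\<phi> has_vector_derivative \<phi>' (x - s)) (at (x - s))"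
  shows "((\<lambda>s. \<phi> (x + s) + \<phi> (x - s)) has_vector_derivative \<phi>' (x + s) - \<phi>' (x - s)) (at s)"
proof -
  have "((\<lambda>s. x + s) has_vector_derivative 1) (at s)" "((\<lambda>s. x - s) has_vector_derivative -1) (at s)"
    by (auto intro!: derivative_eq_intros)
  then have "((\<lambda>s. \<phi> (x + s)) has_vector_derivative \<phi>' (x + s)) (at s)"
      "((\<lambda>s. \<phi> (x - s)) has_vector_derivative - \<phi>' (x - s)) (at s)"
    using vector_diff_chain_at[of "\<lambda>s. x + s" 1 s \<phi>] vector_diff_chain_at[of "\<lambda>s. x - s" "-1" s \<phi>] assms
    by (simp_all add: o_def)
  from has_vector_derivative_add[OF this] show ?thesis
    by simp
qed

lemma norm_second_difference_le:
  fixes \<phi> \<phi>' :: "real \<Rightarrow> complex"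
  assumes \<phi>': "\<And>y. \<bar>y - x\<bar> \<le> \<bar>h\<bar> \<Longrightarrow> (\<phi> has_vector_derivative \<phi>' y) (at y)"
    and linear: "\<And>y. \<bar>y - x\<bar> \<le> \<bar>h\<bar> \<Longrightarrow> norm (\<phi>' y - \<phi>' x - (y - x) *\<^sub>R g) \<le> \<epsilon> * \<bar>y - x\<bar>"
    and "0 \<le> \<epsilon>"
  shows "norm (\<phi> (x + h) + \<phi> (x - h) - 2 * \<phi> x - of_real h ^ 2 * g) \<le> 2 * \<epsilon> * h^2"
proof -
  define k where "k s = \<phi> (x + s) + \<phi> (x - s) - 2 * \<phi> x - of_real s ^ 2 * g" for s :: real
  define k' where "k' s = \<phi>' (x + s) - \<phi>' (x - s) - 2 * of_real s * g" for s :: real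
  have k_deriv: "(k has_vector_derivative k' s) (at s within closed_segment 0 h)"
    if s: "s \<in> closed_segment 0 h" for s
  proof -
    have "\<bar>s\<bar> \<le> \<bar>h\<bar>"
      using s by (auto simp: closed_segment_eq_real_ivl split: if_splits)
    then have "((\<lambda>s. \<phi> (x + s) + \<phi> (x - s)) has_vector_derivative \<phi>' (x + s) - \<phi>' (x - s)) (at s)"
      using \<phi>' by (intro has_vector_derivative_symmetric_sum) auto
    moreover have "((\<lambda>s. of_real s ^ 2 * g) has_vector_derivative 2 * of_real s * g) (at s)"
      by (rule has_vector_derivative_real_field) (auto intro!: derivative_eq_intros)
    ultimately have "(k has_vector_derivative (\<phi>' (x + s) - \<phi>' (x - s) - 0 - 2 * of_real s * g)) (at s)"
      unfolding k_def by (intro has_vector_derivative_diff has_vector_derivative_const)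
    then show ?thesis
      unfolding k'_def by (simp add: has_vector_derivative_at_within)
  qed
  have k'_bound: "norm (k' s - k' 0) \<le> 2 * \<epsilon> * \<bar>h\<bar>" if s: "s \<in> closed_segment 0 h" for s
  proof -
    have sh: "\<bar>s\<bar> \<le> \<bar>h\<bar>"
      using s by (auto simp: closed_segment_eq_real_ivl split: if_splits)
    have "k' s - k' 0 = (\<phi>' (x + s) - \<phi>' x - s *\<^sub>R g) - (\<phi>' (x - s) - \<phi>' x - (- s) *\<^sub>R g)"
      unfolding k'_def by (simp add: scaleR_conv_of_real algebra_simps)
    also have "norm \<dots> \<le> norm (\<phi>' (x + s) - \<phi>' x - s *\<^sub>R g) + norm (\<phi>' (x - s) - \<phi>' x - (- s) *\<^sub>R g)"
      by (rule norm_triangle_ineq4)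
    also have "\<dots> \<le> \<epsilon> * \<bar>s\<bar> + \<epsilon> * \<bar>s\<bar>"
      using linear[of "x + s"] linear[of "x - s"] sh by (intro add_mono) auto
    also have "\<dots> \<le> 2 * \<epsilon> * \<bar>h\<bar>"
      using sh \<open>0 \<le> \<epsilon>\<close> by (simp add: mult_left_mono)
    finally show ?thesis .
  qed
  have "norm (k h - k 0 - (h - 0) *\<^sub>R k' 0) \<le> norm (h - 0) * (2 * \<epsilon> * \<bar>h\<bar>)"
    by (rule vector_differentiable_bound_linearization[OF k_deriv _ k'_bound]) auto
  moreover have "k 0 = 0" "k' 0 = 0"
    by (simp_all add: k_def k'_def)
  ultimately show ?thesis
    unfolding k_def by (simp add: power2_eq_square abs_mult_self_eq mult_ac)
qed

lemma second_sym_quotient_tendsto: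
  fixes \<phi> \<phi>' :: "real \<Rightarrow> complex"
  assumes d: "d > 0"
    and \<phi>': "\<And>y. \<bar>y - x\<bar> < d \<Longrightarrow> (\<phi> has_vector_derivative \<phi>' y) (at y)"
    and \<phi>'': "(\<phi>' has_vector_derivative g) (at x)"
  shows "(second_sym_quotient \<phi> x \<longlongrightarrow> g) (at 0)"
proof (rule tendstoI)
  fix e :: real
  assume e: "e > 0"
  have "\<forall>e>0. \<exists>d>0. \<forall>y. norm (y - x) < d \<longrightarrow> norm (\<phi>' y - \<phi>' x - (y - x) *\<^sub>R g) \<le> e * norm (y - x)"
    using \<phi>'' unfolding has_vector_derivative_def has_derivative_at_alt by blast
  moreover have "e / 4 > 0"
    using e by simp
  ultimately obtain d2 where d2: "d2 > 0"
    and linear: "\<And>y. norm (y - x) < d2 \<Longrightarrow> norm (\<phi>' y - \<phi>' x - (y - x) *\<^sub>R g) \<le> (e / 4) * norm (y - x)"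
    by blast
  have "dist (second_sym_quotient \<phi> x h) g < e" if h: "h \<noteq> 0" "dist h 0 < min d d2" for h
  proof -
    have "norm (\<phi> (x + h) + \<phi> (x - h) - 2 * \<phi> x - of_real h ^ 2 * g) \<le> 2 * (e / 4) * h^2"
    proof (rule norm_second_difference_le[where \<phi>' = \<phi>'])
      fix y
      assume "\<bar>y - x\<bar> \<le> \<bar>h\<bar>"
      then have "\<bar>y - x\<bar> < d" "\<bar>y - x\<bar> < d2"
        using h by (auto simp: dist_real_def)
      then show "(\<phi> has_vector_derivative \<phi>' y) (at y)"
        and "norm (\<phi>' y - \<phi>' x - (y - x) *\<^sub>R g) \<le> e / 4 * \<bar>y - x\<bar>"
        using \<phi>' linear[of y] by auto
    qed (use e in simp)
    moreover have "second_sym_quotient \<phi> x h - g = (\<phi> (x + h) + \<phi> (x - h) - 2 * \<phi> x - of_real h ^ 2 * g) / of_real (h^2)"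
      unfolding second_sym_quotient_def using h by (simp add: field_simps)
    ultimately have "dist (second_sym_quotient \<phi> x h) g \<le> e / 2"
      using h by (simp add: dist_norm norm_divide norm_power divide_le_eq)
    then show ?thesis
      using e by simp
  qed
  moreover have "min d d2 > 0"
    using d d2 by simp
  ultimately show "\<forall>\<^sub>F h in at 0. dist (second_sym_quotient \<phi> x h) g < e"
    unfolding eventually_at by blast
qed

section \<open>A regular summation method\<close>

lemma summation_by_parts_weighted:
  fixes a :: "nat \<Rightarrow> 'a::real_vector"
  assumes "v 0 = 1"
  shows "(\<Sum>n<N. v n *\<^sub>R a n) - L
           = v N *\<^sub>R ((\<Sum>n<N. a n) - L) + (\<Sum>n<N. (v n - v (Suc n)) *\<^sub>R ((\<Sum>i<Suc n. a i) - L))"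
  by (induction N) (simp_all add: assms algebra_simps)

lemma norm_sum_scaleR_le_split:
  fixes r :: "nat \<Rightarrow> 'a::real_normed_vector"
  assumes "\<And>n. N0 \<le> n \<Longrightarrow> norm (r n) \<le> d"
  shows "norm (\<Sum>n<N. w n *\<^sub>R r n) \<le> (\<Sum>n<N0. norm (r n) * \<bar>w n\<bar>) + d * (\<Sum>n<N. \<bar>w n\<bar>)"
proof -
  have "norm (\<Sum>n<N. w n *\<^sub>R r n) \<le> (\<Sum>n<N. norm (r n) * \<bar>w n\<bar>)"
    by (rule order.trans[OF norm_sum]) (simp add: mult.commute)
  also have "\<dots> \<le> (\<Sum>n<N. (if n < N0 then norm (r n) * \<bar>w n\<bar> else 0) + d * \<bar>w n\<bar>)"
  proof (rule sum_mono)
    fix n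
    show "norm (r n) * \<bar>w n\<bar> \<le> (if n < N0 then norm (r n) * \<bar>w n\<bar> else 0) + d * \<bar>w n\<bar>"
      using assms[of n] order.trans[OF norm_ge_zero assms[of N0]]
      by (cases "n < N0") (auto intro!: mult_right_mono)
  qed
  also have "\<dots> = (\<Sum>n\<in>{..<N} \<inter> {..<N0}. norm (r n) * \<bar>w n\<bar>) + d * (\<Sum>n<N. \<bar>w n\<bar>)"
    by (simp add: sum.distrib sum_distrib_left sum.inter_restrict)
  also have "\<dots> \<le> (\<Sum>n<N0. norm (r n) * \<bar>w n\<bar>) + d * (\<Sum>n<N. \<bar>w n\<bar>)"
    by (intro add_mono sum_mono2) auto
  finally show ?thesis .
qed

lemma norm_weighted_sum_minus_le:
  fixes a :: "nat \<Rightarrow> 'a::real_normed_vector"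
  assumes "v 0 = 1" and "\<And>n. \<bar>v n\<bar> \<le> 1"
    and tail: "\<And>n. N0 \<le> n \<Longrightarrow> norm ((\<Sum>i<Suc n. a i) - L) \<le> d" and "N0 < N"
  shows "norm ((\<Sum>n<N. v n *\<^sub>R a n) - L)
           \<le> d + (\<Sum>n<N0. norm ((\<Sum>i<Suc n. a i) - L) * \<bar>v n - v (Suc n)\<bar>) + d * (\<Sum>n<N. \<bar>v n - v (Suc n)\<bar>)"
proof -
  obtain M where M: "N = Suc M" "N0 \<le> M"
    using \<open>N0 < N\<close> by (cases N) auto
  have "norm (v N *\<^sub>R ((\<Sum>n<N. a n) - L)) \<le> d"
    using tail[OF M(2)] assms(2)[of N] unfolding M(1)
    by (simp add: mult_le_one order.trans[OF mult_right_mono])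
  moreover have "norm (\<Sum>n<N. (v n - v (Suc n)) *\<^sub>R ((\<Sum>i<Suc n. a i) - L))
      \<le> (\<Sum>n<N0. norm ((\<Sum>i<Suc n. a i) - L) * \<bar>v n - v (Suc n)\<bar>) + d * (\<Sum>n<N. \<bar>v n - v (Suc n)\<bar>)"
    by (rule norm_sum_scaleR_le_split[OF tail])
  ultimately show ?thesis
    unfolding summation_by_parts_weighted[of v, OF assms(1)]
    using norm_triangle_ineq by (smt (verit))
qed

lemma tendsto_weighted_series:
  fixes a :: "nat \<Rightarrow> 'a::real_normed_vector" and v :: "'b \<Rightarrow> nat \<Rightarrow> real"
  assumes partial_sums: "(\<lambda>N. \<Sum>n\<le>N. a n) \<longlonglongrightarrow> L"
    and v0: "\<And>h. v h 0 = 1"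
    and v_bounded: "\<And>h n. \<bar>v h n\<bar> \<le> 1"
    and v_variation: "\<forall>\<^sub>F h in F. \<forall>N. (\<Sum>n<N. \<bar>v h n - v h (Suc n)\<bar>) \<le> V"
    and v_tendsto: "\<And>n. ((\<lambda>h. v h n) \<longlongrightarrow> 1) F"
    and weighted_sums: "\<forall>\<^sub>F h in F. (\<lambda>n. v h n *\<^sub>R a n) sums Q h"
  shows "(Q \<longlongrightarrow> L) F"
proof (rule tendstoI)
  fix e :: real
  assume e: "e > 0"
  define d where "d = e / (\<bar>V\<bar> + 3)"
  have d: "d > 0" "d * (\<bar>V\<bar> + 2) < e"
    unfolding d_def using e by (simp_all add: field_simps)
  obtain N0 where N0: "\<And>n. N0 \<le> n \<Longrightarrow> norm ((\<Sum>i<Suc n. a i) - L) \<le> d"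
    using partial_sums d(1) unfolding lim_sequentially lessThan_Suc_atMost dist_norm by (meson less_imp_le)
  define X where "X h = (\<Sum>n<N0. norm ((\<Sum>i<Suc n. a i) - L) * \<bar>v h n - v h (Suc n)\<bar>)" for h
  have "(X \<longlongrightarrow> (\<Sum>n<N0. norm ((\<Sum>i<Suc n. a i) - L) * \<bar>1 - 1\<bar>)) F"
    unfolding X_def by (intro tendsto_intros v_tendsto)
  then have "\<forall>\<^sub>F h in F. X h < d"
    using d(1) by (simp add: order_tendstoD(2))
  then show "\<forall>\<^sub>F h in F. dist (Q h) L < e"
    using v_variation weighted_sums
  proof eventually_elim
    case (elim h)
    have "norm ((\<Sum>n<N. v h n *\<^sub>R a n) - L) \<le> d + X h + d * \<bar>V\<bar>" if "N0 < N" for N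
    proof -
      have "norm ((\<Sum>n<N. v h n *\<^sub>R a n) - L) \<le> d + X h + d * (\<Sum>n<N. \<bar>v h n - v h (Suc n)\<bar>)"
        unfolding X_def using v0 v_bounded N0 that by (rule norm_weighted_sum_minus_le)
      moreover have "d * (\<Sum>n<N. \<bar>v h n - v h (Suc n)\<bar>) \<le> d * \<bar>V\<bar>"
        using elim(2) d(1) abs_ge_self[of V] by (intro mult_left_mono) (auto intro: order.trans)
      ultimately show ?thesis
        by linarith
    qed
    moreover have "(\<lambda>N. norm ((\<Sum>n<N. v h n *\<^sub>R a n) - L)) \<longlonglongrightarrow> norm (Q h - L)"
      using elim(3) unfolding sums_def by (intro tendsto_intros)
    ultimately have "norm (Q h - L) \<le> d + X h + d * \<bar>V\<bar>"
      by (intro tendsto_upperbound) (auto simp: eventually_sequentially intro!: exI[of _ "Suc N0"])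
    then show "dist (Q h) L < e"
      using elim(1) d(2) by (simp add: dist_norm algebra_simps)
  qed
qed

text \<open>\<open>riemann_weight s = (sin (s/2) / (s/2))^2\<close> is the factor produced by a second symmetric
  difference: with step \<open>h\<close> it turns \<open>e^(inx) / n^2\<close> into \<open>- h^2 riemann_weight (n h) e^(inx)\<close>.\<close>

definition riemann_weight :: "real \<Rightarrow> real" where
  "riemann_weight s = (if s = 0 then 1 else (2 - 2 * cos s) / s^2)"

lemma riemann_weight_minus [simp]: "riemann_weight (- s) = riemann_weight s"
  by (simp add: riemann_weight_def)

lemma riemann_weight_mult_square: "riemann_weight t * t^2 = 2 - 2 * cos t"
  by (simp add: riemann_weight_def)

lemma riemann_weight_bounds: "0 \<le> riemann_weight s" "riemann_weight s \<le> 1"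
proof -
  have "(sin (s / 2))^2 \<le> (s / 2)^2"
    using abs_sin_x_le_abs_x[of "s / 2"] by (metis abs_ge_zero power2_abs power_mono)
  moreover have "cos s = 1 - 2 * (sin (s / 2))^2"
    using cos_double_sin[of "s / 2"] by simp
  ultimately have "2 - 2 * cos s \<le> s^2"
    by (simp add: power2_eq_square field_simps)
  moreover have "0 \<le> 2 - 2 * cos s"
    by simp
  ultimately show "0 \<le> riemann_weight s" "riemann_weight s \<le> 1"
    by (auto simp: riemann_weight_def field_simps)
qed

lemma riemann_weight_tendsto: "((\<lambda>h. riemann_weight (real n * h)) \<longlongrightarrow> 1) (at 0)"
proof -
  have "((\<lambda>s::real. (2 - 2 * cos s) / s^2) \<longlongrightarrow> 1) (at 0)"
    by real_asymp
  then have "(riemann_weight \<longlongrightarrow> 1) (at 0)"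
    by (rule Lim_transform_eventually) (simp add: eventually_at_filter riemann_weight_def)
  then have "isCont riemann_weight 0"
    by (simp add: isCont_def riemann_weight_def)
  moreover have "((\<lambda>h. real n * h) \<longlongrightarrow> 0) (at (0::real))"
    by (auto intro!: tendsto_eq_intros)
  ultimately have "((\<lambda>h. riemann_weight (real n * h)) \<longlongrightarrow> riemann_weight 0) (at 0)"
    by (rule isCont_tendsto_compose)
  moreover have "riemann_weight 0 = 1"
    by (simp add: riemann_weight_def)
  ultimately show ?thesis
    by (simp only:)
qed

lemma riemann_weight_has_derivative:
  fixes s :: real
  assumes "s > 0"
  shows "((\<lambda>s. (2 - 2 * cos s) / s^2) has_real_derivative (2 * s * sin s - 4 + 4 * cos s) / s^3) (at s)"
proof -
  have "((\<lambda>s. (2 - 2 * cos s) / s^2) has_real_derivative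
      (2 * sin s * s^2 - (2 - 2 * cos s) * (2 * s)) / (s^2 * s^2)) (at s)"
    using assms by (auto intro!: derivative_eq_intros)
  moreover have "(2 * sin s * s^2 - (2 - 2 * cos s) * (2 * s)) / (s^2 * s^2)
      = (2 * s * sin s - 4 + 4 * cos s) / s^3"
    using assms by (simp add: power2_eq_square power3_eq_cube field_simps)
  ultimately show ?thesis
    by simp
qed

lemma abs_riemann_weight_derivative_numerator_le:
  fixes s :: real
  assumes s: "s > 0"
  shows "\<bar>2 * s * sin s - 4 + 4 * cos s\<bar> \<le> s^4 / 2"
proof -
  have sin_bound: "\<bar>sin s - s\<bar> \<le> s^3 / 6"
    using Maclaurin_sin_bound[of s 3] s by (simp add: sin_coeff_def eval_nat_numeral fact_numeral)
  obtain t where t: "cos s = (\<Sum>m<4. cos_coeff m * s ^ m) + (cos (t + 1/2 * real 4 * pi) / fact 4) * s ^ 4"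
    using Maclaurin_cos_expansion2[of s 4] s by auto
  have "{..<4::nat} = {0, 1, 2, 3}"
    by auto
  moreover have "cos_coeff 0 = 1" "cos_coeff 1 = 0" "cos_coeff 2 = -1/2" "cos_coeff 3 = 0"
    by (simp_all add: cos_coeff_def)
  ultimately have "(\<Sum>m<4. cos_coeff m * s ^ m) = 1 - s^2 / 2"
    by simp
  then have cos_bound: "\<bar>cos s - (1 - s^2 / 2)\<bar> \<le> s^4 / 24"
    using t abs_cos_le_one[of "t + 1/2 * real 4 * pi"] s by (simp add: abs_mult fact_numeral)
  have "\<bar>2 * s * (sin s - s)\<bar> \<le> 2 * s * (s^3 / 6)"
    using sin_bound s by (simp add: abs_mult mult_left_mono)
  moreover have "\<bar>4 * (cos s - (1 - s^2 / 2))\<bar> \<le> 4 * (s^4 / 24)"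
    using cos_bound by (simp only: abs_mult abs_numeral) simp
  moreover have "2 * s * sin s - 4 + 4 * cos s = 2 * s * (sin s - s) + 4 * (cos s - (1 - s^2 / 2))"
    by (simp add: algebra_simps power2_eq_square)
  moreover have "2 * s * (s^3 / 6) + 4 * (s^4 / 24) = s^4 / 2"
    by (simp add: eval_nat_numeral field_simps)
  ultimately show ?thesis
    using abs_triangle_ineq by (smt (verit))
qed

lemma riemann_weight_derivative_bound:
  fixes s :: real
  assumes s: "s > 0"
  shows "\<bar>(2 * s * sin s - 4 + 4 * cos s) / s^3\<bar> \<le> 10"
    and "1 \<le> s \<Longrightarrow> \<bar>(2 * s * sin s - 4 + 4 * cos s) / s^3\<bar> \<le> 10 / s^2"
proof -
  show large: "\<bar>(2 * s * sin s - 4 + 4 * cos s) / s^3\<bar> \<le> 10 / s^2" if "1 \<le> s"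
  proof -
    have "\<bar>2 * s * sin s\<bar> \<le> 2 * s"
      using s abs_sin_le_one[of s] by (simp add: abs_mult mult_left_le)
    moreover have "\<bar>4 * cos s\<bar> \<le> 4"
      using abs_cos_le_one[of s] by (simp add: abs_mult)
    ultimately have "\<bar>2 * s * sin s - 4 + 4 * cos s\<bar> \<le> 10 * s"
      using that by linarith
    then have "\<bar>2 * s * sin s - 4 + 4 * cos s\<bar> / s^3 \<le> 10 * s / s^3"
      using s by (intro divide_right_mono) auto
    also have "10 * s / s^3 = 10 / s^2"
      using s by (simp add: power2_eq_square power3_eq_cube)
    finally show ?thesis
      using s by (simp add: abs_divide)
  qed
  show "\<bar>(2 * s * sin s - 4 + 4 * cos s) / s^3\<bar> \<le> 10"
  proof (cases "1 \<le> s")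
    case True
    then have "10 / s^2 \<le> 10"
      by (simp add: divide_le_eq one_le_power)
    then show ?thesis
      using large[OF True] by linarith
  next
    case False
    have "s^4 / 2 \<le> s^3"
      using s False by (simp add: power_def eval_nat_numeral field_simps mult_left_le)
    moreover have "0 < s^3"
      using s by simp
    ultimately have "\<bar>2 * s * sin s - 4 + 4 * cos s\<bar> \<le> 10 * s^3"
      using abs_riemann_weight_derivative_numerator_le[OF s] by linarith
    then show ?thesis
      using s by (simp add: abs_divide divide_le_eq)
  qed
qed

lemma abs_riemann_weight_diff_le:
  assumes a: "0 < a" and h: "0 < h"
  shows "\<bar>riemann_weight a - riemann_weight (a + h)\<bar> \<le> h * 10"
    and "1 \<le> a \<Longrightarrow> \<bar>riemann_weight a - riemann_weight (a + h)\<bar> \<le> h * (10 / a^2)"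
proof -
  have weights: "riemann_weight a = (2 - 2 * cos a) / a^2"
      "riemann_weight (a + h) = (2 - 2 * cos (a + h)) / (a + h)^2"
    using a h by (auto simp: riemann_weight_def)
  obtain z where z: "a < z" "z < a + h"
    and mvt: "(2 - 2 * cos (a + h)) / (a + h)^2 - (2 - 2 * cos a) / a^2
                = (a + h - a) * ((2 * z * sin z - 4 + 4 * cos z) / z^3)"
    using MVT2[of a "a + h" "\<lambda>s. (2 - 2 * cos s) / s^2" "\<lambda>s. (2 * s * sin s - 4 + 4 * cos s) / s^3"]
      riemann_weight_has_derivative a h by force
  have diff: "\<bar>riemann_weight a - riemann_weight (a + h)\<bar> = h * \<bar>(2 * z * sin z - 4 + 4 * cos z) / z^3\<bar>"
    unfolding weights abs_minus_commute[of "(2 - 2 * cos a) / a^2"] mvt using h by (simp add: abs_mult)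
  show "\<bar>riemann_weight a - riemann_weight (a + h)\<bar> \<le> h * 10"
    unfolding diff using riemann_weight_derivative_bound(1)[of z] z a h by (intro mult_left_mono) auto
  assume "1 \<le> a"
  then have "\<bar>(2 * z * sin z - 4 + 4 * cos z) / z^3\<bar> \<le> 10 / z^2"
    using riemann_weight_derivative_bound(2)[of z] z by simp
  also have "10 / z^2 \<le> 10 / a^2"
    using z a by (intro divide_left_mono power_mono) auto
  finally show "\<bar>riemann_weight a - riemann_weight (a + h)\<bar> \<le> h * (10 / a^2)"
    unfolding diff using h by (intro mult_left_mono) auto
qed

lemma riemann_weight_step:
  assumes h: "h > 0" and n: "1 \<le> n"
  shows "\<bar>riemann_weight (real n * h) - riemann_weight (real (Suc n) * h)\<bar>
           \<le> 40 * (1 / (real (n - 1) * h + 1) - 1 / (real n * h + 1))"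
proof -
  define a where "a = real n * h"
  define m where "m = real (n - 1)"
  have a: "0 < a" and m: "m = real n - 1" "0 \<le> m"
    unfolding a_def m_def using h n by auto
  have diff: "riemann_weight (real (Suc n) * h) = riemann_weight (a + h)"
    unfolding a_def by (simp add: algebra_simps)
  have "0 \<le> m * h"
    using m(2) h by simp
  then have "0 < m * h + 1"
    by linarith
  moreover have "a + 1 = m * h + 1 + h"
    unfolding a_def m(1) by (simp add: algebra_simps)
  ultimately have telescope: "1 / (real (n - 1) * h + 1) - 1 / (real n * h + 1) = h / ((m * h + 1) * (a + 1))"
    unfolding m_def[symmetric] a_def[symmetric] using h by (simp add: field_simps)
  have pos: "0 < (m * h + 1) * (a + 1)"
    using \<open>0 < m * h + 1\<close> a by simp
  have le: "m * h + 1 \<le> a + 1"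
    unfolding a_def m(1) using h by (simp add: algebra_simps)
  show ?thesis
  proof (cases "a \<le> 1")
    case True
    have "(m * h + 1) * (a + 1) \<le> 2 * 2"
      using le True m h a by (intro mult_mono) auto
    then have "h / 4 \<le> h / ((m * h + 1) * (a + 1))"
      using pos h by (intro divide_left_mono) auto
    then show ?thesis
      using abs_riemann_weight_diff_le(1)[OF a h] unfolding telescope unfolding diff a_def[symmetric] by simp
  next
    case False
    have "(m * h + 1) * (a + 1) \<le> (a + 1) * (a + 1)"
      using le m h a by (intro mult_right_mono) auto
    also have "\<dots> \<le> (2 * a) * (2 * a)"
      using False by (intro mult_mono) auto
    finally have "h / (4 * a^2) \<le> h / ((m * h + 1) * (a + 1))"
      using pos h a by (intro divide_left_mono) (auto simp: power2_eq_square)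
    moreover have "h * (10 / a^2) = 40 * (h / (4 * a^2))"
      by simp
    ultimately show ?thesis
      using abs_riemann_weight_diff_le(2)[OF a h] False unfolding telescope unfolding diff a_def[symmetric]
      by linarith
  qed
qed

lemma riemann_weight_variation:
  assumes "h \<noteq> 0"
  shows "(\<Sum>n<N. \<bar>riemann_weight (real n * h) - riemann_weight (real (Suc n) * h)\<bar>) \<le> 41"
proof -
  have bound: "(\<Sum>n<N. \<bar>riemann_weight (real n * h) - riemann_weight (real (Suc n) * h)\<bar>) \<le> 41"
    if h: "h > 0" for h
  proof (cases N)
    case (Suc M)
    define \<psi> where "\<psi> k = 1 / (real k * h + 1)" for k :: nat
    have "(\<Sum>n<N. \<bar>riemann_weight (real n * h) - riemann_weight (real (Suc n) * h)\<bar>)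
        = \<bar>riemann_weight 0 - riemann_weight h\<bar>
          + (\<Sum>k<M. \<bar>riemann_weight (real (Suc k) * h) - riemann_weight (real (Suc (Suc k)) * h)\<bar>)"
      unfolding Suc by (subst sum.lessThan_Suc_shift) simp
    also have "\<dots> \<le> 1 + (\<Sum>k<M. 40 * (\<psi> k - \<psi> (Suc k)))"
    proof (intro add_mono sum_mono)
      show "\<bar>riemann_weight 0 - riemann_weight h\<bar> \<le> 1"
        using riemann_weight_bounds[of h] by (simp add: riemann_weight_def)
      fix k
      show "\<bar>riemann_weight (real (Suc k) * h) - riemann_weight (real (Suc (Suc k)) * h)\<bar>
          \<le> 40 * (\<psi> k - \<psi> (Suc k))"
        using riemann_weight_step[OF h, of "Suc k"] unfolding \<psi>_def by simp
    qed
    also have "(\<Sum>k<M. 40 * (\<psi> k - \<psi> (Suc k))) = 40 * (\<psi> 0 - \<psi> M)"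
      using sum_lessThan_telescope'[of "\<lambda>k. 40 * \<psi> k" M] by (simp add: algebra_simps)
    also have "40 * (\<psi> 0 - \<psi> M) \<le> 40"
      unfolding \<psi>_def using h by simp
    finally show ?thesis
      by simp
  qed simp
  show ?thesis
  proof (cases "h > 0")
    case False
    then show ?thesis
      using bound[of "- h"] assms by simp
  qed (rule bound)
qed

section \<open>Riemann's function\<close>

lemma second_difference_sym_term:
  "sym_term c (x + h) n + sym_term c (x - h) n - 2 * sym_term c x n
     = - of_real (riemann_weight (real n * h) * (real n * h)^2) * sym_term c x n"
proof -
  have "complex_of_real (2 * cos (real n * h)) = 2 * cos (complex_of_real (real n * h))"
    by (subst cos_of_real) simp
  also have "\<dots> = expi (int n) h + expi (- int n) h"
    by (simp add: cos_exp_eq mult.assoc)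
  finally have "expi (int n) h + expi (- int n) h = of_real (2 * cos (real n * h))"
    by simp
  then have weight: "expi (int n) h + expi (- int n) h - 2 = - of_real (riemann_weight (real n * h) * (real n * h)^2)"
    by (simp add: riemann_weight_mult_square)
  have expi_diff: "expi k (x - h) = expi k x * expi (- k) h" for k
    using expi_add[of k x "- h"] by simp
  have "sym_term c (x + h) n + sym_term c (x - h) n - 2 * sym_term c x n
      = sym_term c x n * (expi (int n) h + expi (- int n) h - 2)"
    unfolding sym_term_def expi_add expi_diff by (simp add: algebra_simps)
  then show ?thesis
    unfolding weight by simp
qed

text \<open>The term \<open>n = 0\<close> vanishes because division by zero yields zero.\<close>

definition riemann_series :: "(int \<Rightarrow> complex) \<Rightarrow> real \<Rightarrow> complex" where
  "riemann_series c y = (\<Sum>n. sym_term c y n / of_nat n ^ 2)"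

definition riemann_fun :: "(int \<Rightarrow> complex) \<Rightarrow> real \<Rightarrow> complex" where
  "riemann_fun c y = c 0 * of_real (y^2) / 2 - riemann_series c y"

lemma has_integral_sym_term_expi:
  assumes "m \<noteq> 0"
  shows "((\<lambda>y. sym_term c y n / of_nat n ^ 2 * expi (- m) y) has_integral
           (if int n = \<bar>m\<bar> then of_real (2 * pi) * c m / of_int (m^2) else 0)) {0..2 * pi}"
proof -
  have "sym_term c y n / of_nat n ^ 2 * expi (- m) y =
      (c (int n) * (expi (int n) y * expi (- m) y) + c (- int n) * (expi (- int n) y * expi (- m) y)) / of_nat n ^ 2" for y
    unfolding sym_term_def by (simp add: algebra_simps)
  also have "\<dots> y = c (int n) / of_nat n ^ 2 * expi (int n - m) y + c (- int n) / of_nat n ^ 2 * expi (- int n - m) y" for y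
    unfolding expi_mult by (simp add: add_divide_distrib)
  finally have "sym_term c y n / of_nat n ^ 2 * expi (- m) y =
      c (int n) / of_nat n ^ 2 * expi (int n - m) y + c (- int n) / of_nat n ^ 2 * expi (- int n - m) y" for y .
  moreover have "((\<lambda>y. c (int n) / of_nat n ^ 2 * expi (int n - m) y + c (- int n) / of_nat n ^ 2 * expi (- int n - m) y)
      has_integral (c (int n) / of_nat n ^ 2 * (if int n - m = 0 then of_real (2 * pi) else 0)
                    + c (- int n) / of_nat n ^ 2 * (if - int n - m = 0 then of_real (2 * pi) else 0))) {0..2 * pi}"
    by (intro has_integral_add has_integral_mult_right has_integral_expi)
  moreover have "c (int n) / of_nat n ^ 2 * (if int n - m = 0 then of_real (2 * pi) else 0)
      + c (- int n) / of_nat n ^ 2 * (if - int n - m = 0 then of_real (2 * pi) else 0)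
      = (if int n = \<bar>m\<bar> then of_real (2 * pi) * c m / of_int (m^2) else 0)"
  proof -
    have "of_nat n ^ 2 = (of_int (m^2) :: complex)" if "int n = \<bar>m\<bar>"
      using that by (metis of_int_of_nat_eq of_nat_power power2_abs of_int_power)
    then show ?thesis
      using assms by (auto simp: abs_if)
  qed
  ultimately show ?thesis
    by simp
qed

lemma continuous_on_riemann_term: "continuous_on S (\<lambda>y. sym_term c y n / of_nat n ^ 2)"
  by (cases "n = 0") (auto simp: sym_term_def intro!: continuous_intros)

lemma summable_const_div_square: "summable (\<lambda>n. B / real n ^ 2)"
  using summable_mult[OF inverse_power_summable[of 2], of B] by (simp add: divide_inverse)

context
  fixes c :: "int \<Rightarrow> complex" and B :: real
  assumes coeff_bound: "\<And>j. cmod (c j) \<le> B"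
begin

lemma norm_riemann_term_le: "cmod (sym_term c y n / of_nat n ^ 2) \<le> 2 * B / real n ^ 2"
proof -
  have "cmod (sym_term c y n) \<le> 2 * B"
    unfolding sym_term_def using coeff_bound[of "int n"] coeff_bound[of "- int n"]
    by (intro order.trans[OF norm_triangle_ineq]) (simp add: norm_mult norm_expi)
  then show ?thesis
    by (simp add: norm_divide norm_power divide_right_mono)
qed

lemma riemann_series_sums: "(\<lambda>n. sym_term c y n / of_nat n ^ 2) sums riemann_series c y"
proof -
  have "summable (\<lambda>n. sym_term c y n / of_nat n ^ 2)"
    by (rule summable_norm_cancel, rule summable_comparison_test[OF _ summable_const_div_square[of "2 * B"]])
       (auto intro!: exI norm_riemann_term_le)
  then show ?thesis
    unfolding riemann_series_def by (rule summable_sums)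
qed

lemma continuous_riemann_series: "continuous_on UNIV (riemann_series c)"
proof (rule uniform_limit_theorem)
  show "uniform_limit UNIV (\<lambda>N y. \<Sum>n<N. sym_term c y n / of_nat n ^ 2) (riemann_series c) sequentially"
    unfolding riemann_series_def
    by (rule Weierstrass_m_test[OF norm_riemann_term_le summable_const_div_square])
qed (auto intro!: always_eventually continuous_on_sum continuous_on_riemann_term)

lemma riemann_series_periodic: "riemann_series c (y + 2 * pi) = riemann_series c y"
  unfolding riemann_series_def sym_term_def by (simp only: expi_add_2pi)

lemma riemann_series_fourier_coeff:
  assumes "m \<noteq> 0"
  shows "((\<lambda>y. riemann_series c y * expi (- m) y) has_integral of_real (2 * pi) * c m / of_int (m^2)) {0..2 * pi}"
proof -
  let ?u = "\<lambda>n y. sym_term c y n / of_nat n ^ 2 * expi (- m) y"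
  have uniform: "uniform_limit {0..2 * pi} (\<lambda>N y. \<Sum>n<N. ?u n y) (\<lambda>y. \<Sum>n. ?u n y) sequentially"
    by (rule Weierstrass_m_test[OF _ summable_const_div_square[of "2 * B"]])
       (simp only: norm_mult norm_expi mult_1_right norm_riemann_term_le)
  have "continuous_on {0..2 * pi} (\<lambda>y. \<Sum>n<N. ?u n y)" for N
    by (intro continuous_on_sum continuous_on_mult continuous_on_riemann_term continuous_intros)
  then obtain I J where I: "\<And>N. ((\<lambda>y. \<Sum>n<N. ?u n y) has_integral I N) {0..2 * pi}"
    and J: "((\<lambda>y. \<Sum>n. ?u n y) has_integral J) {0..2 * pi}" and "I \<longlonglongrightarrow> J"
    using uniform_limit_integral[OF uniform] by auto
  define K where "K = of_real (2 * pi) * c m / of_int (m^2)"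
  have "I N = (\<Sum>n<N. if int n = \<bar>m\<bar> then K else 0)" for N
  proof (rule has_integral_unique[OF I])
    show "((\<lambda>y. \<Sum>n<N. ?u n y) has_integral (\<Sum>n<N. if int n = \<bar>m\<bar> then K else 0)) {0..2 * pi}"
      unfolding K_def by (intro has_integral_sum has_integral_sym_term_expi assms) auto
  qed
  then have "I N = K" if "Suc (nat \<bar>m\<bar>) \<le> N" for N
  proof -
    have "(\<Sum>n<N. if int n = \<bar>m\<bar> then K else 0) = (\<Sum>n<N. if n = nat \<bar>m\<bar> then K else 0)"
      by (intro sum.cong refl) auto
    also have "\<dots> = K"
      using that by (simp add: sum.delta)
    finally show ?thesis
      using \<open>I N = _\<close> by simp
  qed
  then have "\<forall>\<^sub>F N in sequentially. I N = K"
    by (auto simp: eventually_sequentially)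
  then have "I \<longlonglongrightarrow> K"
    by (rule tendsto_eventually)
  with \<open>I \<longlonglongrightarrow> J\<close> have "J = K"
    using LIMSEQ_unique by blast
  moreover have "(\<Sum>n. ?u n y) = riemann_series c y * expi (- m) y" for y
    using sums_unique[OF sums_mult2[OF riemann_series_sums]] by simp
  ultimately show ?thesis
    using J unfolding K_def by simp
qed


lemma riemann_series_fourier_integral:
  obtains I where "((\<lambda>y. riemann_series c y * expi (- m) y) has_integral I) {0..2 * pi}"
    and "of_int m ^ 2 * I = (if m = 0 then 0 else of_real (2 * pi) * c m)"
proof (cases "m = 0")
  case True
  have "continuous_on {0..2 * pi} (\<lambda>y. riemann_series c y * expi (- m) y)"
    by (intro continuous_intros continuous_on_subset[OF continuous_riemann_series]) auto
  then have "((\<lambda>y. riemann_series c y * expi (- m) y) has_integral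
      integral {0..2 * pi} (\<lambda>y. riemann_series c y * expi (- m) y)) {0..2 * pi}"
    by (intro integrable_integral integrable_continuous_real)
  then show ?thesis
    using True that by simp
next
  case False
  then show ?thesis
    using that[OF riemann_series_fourier_coeff[OF False]] by simp
qed

lemma riemann_fun_second_difference_sums:
  assumes "h \<noteq> 0"
  shows "(\<lambda>n. riemann_weight (real n * h) *\<^sub>R (if n = 0 then c 0 else sym_term c x n))
           sums second_sym_quotient (riemann_fun c) x h"
proof -
  define b where "b n = (if n = 0 then 0 else riemann_weight (real n * h) *\<^sub>R sym_term c x n)" for n
  define S where "S = riemann_series c (x + h) + riemann_series c (x - h) - 2 * riemann_series c x"
  have "(\<lambda>n. sym_term c (x + h) n / of_nat n ^ 2 + sym_term c (x - h) n / of_nat n ^ 2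
            - 2 * (sym_term c x n / of_nat n ^ 2)) sums S"
    unfolding S_def by (intro sums_diff sums_add sums_mult riemann_series_sums)
  moreover have "sym_term c (x + h) n / of_nat n ^ 2 + sym_term c (x - h) n / of_nat n ^ 2
      - 2 * (sym_term c x n / of_nat n ^ 2) = - (of_real (h^2) * b n)" for n
    unfolding b_def using second_difference_sym_term[of c x h n]
    by (auto simp: scaleR_conv_of_real power_mult_distrib field_simps)
  ultimately have "(\<lambda>n. - (of_real (h^2) * b n)) sums S"
    by simp
  from sums_mult[OF this, of "- inverse (of_real (h^2))"]
  have "(\<lambda>n. b n) sums (- S / of_real (h^2))"
    using assms by (simp add: field_simps)
  then have "(\<lambda>n. (if n = 0 then c 0 else 0) + b n) sums (c 0 + - S / of_real (h^2))"
    by (intro sums_add) (auto intro: sums_single[of 0, THEN sums_cong[THEN iffD1, rotated]])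
  moreover have "c 0 + - S / of_real (h^2) = second_sym_quotient (riemann_fun c) x h"
    unfolding second_sym_quotient_def riemann_fun_def S_def using assms
    by (simp add: field_simps power2_eq_square)
  moreover have "(if n = 0 then c 0 else 0) + b n
      = riemann_weight (real n * h) *\<^sub>R (if n = 0 then c 0 else sym_term c x n)" for n
    unfolding b_def by (simp add: riemann_weight_def)
  ultimately show ?thesis
    by simp
qed

lemma riemann_fun_second_sym_quotient_tendsto:
  assumes conv: "(\<lambda>N. \<Sum>n = - int N..int N. c n * expi n x) \<longlonglongrightarrow> s"
  shows "(second_sym_quotient (riemann_fun c) x \<longlongrightarrow> s) (at 0)"
proof (rule tendsto_weighted_series[where v = "\<lambda>h n. riemann_weight (real n * h)" and V = 41])
  show "(\<lambda>N. \<Sum>n\<le>N. if n = 0 then c 0 else sym_term c x n) \<longlonglongrightarrow> s"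
    using conv unfolding trig_partial_sum_eq .
  show "\<bar>riemann_weight (real n * h)\<bar> \<le> 1" for h n
    using riemann_weight_bounds[of "real n * h"] by simp
  show "\<forall>\<^sub>F h in at 0. \<forall>N. (\<Sum>n<N. \<bar>riemann_weight (real n * h) - riemann_weight (real (Suc n) * h)\<bar>) \<le> 41"
    unfolding eventually_at_filter by (intro always_eventually allI impI riemann_weight_variation)
  show "\<forall>\<^sub>F h in at 0. (\<lambda>n. riemann_weight (real n * h) *\<^sub>R (if n = 0 then c 0 else sym_term c x n))
          sums second_sym_quotient (riemann_fun c) x h"
    by (simp add: eventually_at_filter riemann_fun_second_difference_sums)
  show "riemann_weight (real 0 * h) = 1" for h
    by (simp add: riemann_weight_def)
  show "((\<lambda>h. riemann_weight (real n * h)) \<longlongrightarrow> 1) (at 0)" for n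
    by (rule riemann_weight_tendsto)
qed

end

section \<open>The series is the Fourier series of its sum\<close>

lemma has_vector_derivative_indefinite_integral:
  fixes g :: "real \<Rightarrow> complex"
  assumes "continuous_on {a..b} g" "a < y" "y < b"
  shows "((\<lambda>y. integral {a..y} g) has_vector_derivative g y) (at y)"
proof -
  have "((\<lambda>y. integral {a..y} g) has_vector_derivative g y) (at y within {a..b})"
    using assms by (intro integral_has_vector_derivative) auto
  then have "((\<lambda>y. integral {a..y} g) has_vector_derivative g y) (at y within {a<..<b})"
    by (rule has_vector_derivative_within_subset) auto
  then show ?thesis
    using assms(2,3) by (subst (asm) has_vector_derivative_within_open) auto
qed

lemma second_antiderivative:
  fixes f :: "real \<Rightarrow> complex"
  assumes cont_f: "continuous_on {a..b} f"
  obtains \<Phi> \<Phi>' where "continuous_on {a..b} \<Phi>"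
    and "\<And>y. a < y \<Longrightarrow> y < b \<Longrightarrow> (\<Phi> has_vector_derivative \<Phi>' y) (at y)"
    and "\<And>y. a < y \<Longrightarrow> y < b \<Longrightarrow> (\<Phi>' has_vector_derivative f y) (at y)"
proof
  define \<Phi>' where "\<Phi>' y = integral {a..y} f" for y
  have cont_\<Phi>': "continuous_on {a..b} \<Phi>'"
    unfolding \<Phi>'_def by (rule indefinite_integral_continuous_1[OF integrable_continuous_real[OF cont_f]])
  show "continuous_on {a..b} (\<lambda>y. integral {a..y} \<Phi>')"
    by (rule indefinite_integral_continuous_1[OF integrable_continuous_real[OF cont_\<Phi>']])
  show "((\<lambda>y. integral {a..y} \<Phi>') has_vector_derivative \<Phi>' y) (at y)" if "a < y" "y < b" for y
    using cont_\<Phi>' that by (rule has_vector_derivative_indefinite_integral)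
  show "(\<Phi>' has_vector_derivative f y) (at y)" if "a < y" "y < b" for y
    unfolding \<Phi>'_def using cont_f that by (rule has_vector_derivative_indefinite_integral)
qed

lemma riemann_series_eq_quadratic_minus_second_antiderivative:
  assumes coeff_bound: "\<And>j. cmod (c j) \<le> B"
    and conv: "\<And>x. (\<lambda>N. \<Sum>n = - int N..int N. c n * expi n x) \<longlonglongrightarrow> f x"
    and ab: "a < b" and cont_\<Phi>: "continuous_on {a..b} \<Phi>"
    and \<Phi>': "\<And>y. a < y \<Longrightarrow> y < b \<Longrightarrow> (\<Phi> has_vector_derivative \<Phi>' y) (at y)"
    and \<Phi>'': "\<And>y. a < y \<Longrightarrow> y < b \<Longrightarrow> (\<Phi>' has_vector_derivative f y) (at y)"
  obtains \<alpha> \<beta> where "\<And>y. y \<in> {a..b} \<Longrightarrow> riemann_series c y = c 0 * of_real y ^ 2 / 2 - \<alpha> - of_real y * \<beta> - \<Phi> y"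
proof -
  \<comment> \<open>\<open>riemann_fun c\<close> and a second antiderivative \<open>\<Phi>\<close> of \<open>f\<close> have the same second symmetric
     derivative \<open>f\<close>, so by Schwarz's lemma they differ by an affine function.\<close>
  define G where "G y = riemann_fun c y - \<Phi> y" for y
  have cont_G: "continuous_on {a..b} G"
    unfolding G_def riemann_fun_def
    by (intro continuous_intros cont_\<Phi> continuous_on_subset[OF continuous_riemann_series[of c B, OF coeff_bound]]) auto
  have "(second_sym_quotient G x \<longlongrightarrow> f x - f x) (at 0)" if x: "a < x" "x < b" for x
  proof -
    have "second_sym_quotient G x = (\<lambda>h. second_sym_quotient (riemann_fun c) x h - second_sym_quotient \<Phi> x h)"
      unfolding second_sym_quotient_def G_def by (simp add: diff_divide_distrib[symmetric] algebra_simps)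
    moreover have "(second_sym_quotient \<Phi> x \<longlongrightarrow> f x) (at 0)"
      using x by (intro second_sym_quotient_tendsto[where d = "min (x - a) (b - x)" and \<phi>' = \<Phi>'] \<Phi>' \<Phi>'') auto
    moreover have "(second_sym_quotient (riemann_fun c) x \<longlongrightarrow> f x) (at 0)"
      by (rule riemann_fun_second_sym_quotient_tendsto[of c B, OF coeff_bound conv])
    ultimately show ?thesis
      by (metis (no_types) tendsto_diff)
  qed
  then have G_affine: "G y = G a + of_real ((y - a) / (b - a)) * (G b - G a)" if "y \<in> {a..b}" for y
    using schwarz_affine[OF ab cont_G _ that] by simp
  define \<beta> where "\<beta> = (G b - G a) / of_real (b - a)"
  show ?thesis
  proof (rule that[of "G a - of_real a * \<beta>" \<beta>])
    fix y
    assume y: "y \<in> {a..b}"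
    have "of_real ((y - a) / (b - a)) * (G b - G a) = (of_real y - of_real a) * \<beta>"
      unfolding \<beta>_def using ab by (simp add: field_simps)
    then have Gy: "G y = G a + (of_real y - of_real a) * \<beta>"
      using G_affine[OF y] by simp
    have "riemann_series c y = c 0 * of_real y ^ 2 / 2 - \<Phi> y - G y"
      unfolding G_def riemann_fun_def by simp
    also have "\<dots> = c 0 * of_real y ^ 2 / 2 - (G a - of_real a * \<beta>) - of_real y * \<beta> - \<Phi> y"
      unfolding Gy by (simp add: algebra_simps)
    finally show "riemann_series c y = c 0 * of_real y ^ 2 / 2 - (G a - of_real a * \<beta>) - of_real y * \<beta> - \<Phi> y" .
  qed
qed

lemma riemann_series_twice_differentiable:
  assumes coeff_bound: "\<And>j. cmod (c j) \<le> B"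
    and conv: "\<And>x. (\<lambda>N. \<Sum>n = - int N..int N. c n * expi n x) \<longlonglongrightarrow> f x"
    and cont: "continuous_on UNIV f" and ab: "a < b"
  obtains D where "\<And>y. a < y \<Longrightarrow> y < b \<Longrightarrow> (riemann_series c has_vector_derivative D y) (at y)"
    and "\<And>y. a < y \<Longrightarrow> y < b \<Longrightarrow> (D has_vector_derivative c 0 - f y) (at y)"
proof -
  obtain \<Phi> \<Phi>' where \<Phi>: "continuous_on {a..b} \<Phi>"
    and \<Phi>': "\<And>y. a < y \<Longrightarrow> y < b \<Longrightarrow> (\<Phi> has_vector_derivative \<Phi>' y) (at y)"
    and \<Phi>'': "\<And>y. a < y \<Longrightarrow> y < b \<Longrightarrow> (\<Phi>' has_vector_derivative f y) (at y)"
    using second_antiderivative[OF continuous_on_subset[OF cont]] by blast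
  obtain \<alpha> \<beta> where series_eq:
      "\<And>y. y \<in> {a..b} \<Longrightarrow> riemann_series c y = c 0 * of_real y ^ 2 / 2 - \<alpha> - of_real y * \<beta> - \<Phi> y"
    using riemann_series_eq_quadratic_minus_second_antiderivative[OF coeff_bound conv ab \<Phi> \<Phi>' \<Phi>''] by blast
  show ?thesis
  proof (rule that[of "\<lambda>y. c 0 * of_real y - \<beta> - \<Phi>' y"])
    fix y assume y: "a < y" "y < b"
    have "((\<lambda>y. c 0 * of_real y ^ 2 / 2 - \<alpha> - of_real y * \<beta>) has_vector_derivative c 0 * of_real y - \<beta>) (at y)"
      by (rule has_vector_derivative_real_field[where f = "\<lambda>w. c 0 * w ^ 2 / 2 - \<alpha> - w * \<beta>"])
         (auto intro!: derivative_eq_intros)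
    then have "((\<lambda>y. c 0 * of_real y ^ 2 / 2 - \<alpha> - of_real y * \<beta> - \<Phi> y) has_vector_derivative
        c 0 * of_real y - \<beta> - \<Phi>' y) (at y)"
      by (rule has_vector_derivative_diff[OF _ \<Phi>'[OF y]])
    then show "(riemann_series c has_vector_derivative c 0 * of_real y - \<beta> - \<Phi>' y) (at y)"
      by (rule has_vector_derivative_transform_within_open[where S = "{a<..<b}"]) (use y series_eq in auto)
  next
    fix y assume y: "a < y" "y < b"
    have "((\<lambda>y. c 0 * of_real y - \<beta> - \<Phi>' y) has_vector_derivative c 0 - 0 - f y) (at y)"
      using y by (intro has_vector_derivative_diff \<Phi>'' has_vector_derivative_const)
        (rule has_vector_derivative_real_field, auto intro!: derivative_eq_intros)
    then show "((\<lambda>y. c 0 * of_real y - \<beta> - \<Phi>' y) has_vector_derivative c 0 - f y) (at y)"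
      by simp
  qed
qed

lemma has_vector_derivative_periodic:
  fixes P :: "real \<Rightarrow> 'a::real_normed_vector"
  assumes "\<And>y. P (y + T) = P y" and "(P has_vector_derivative D) (at (x + T))"
  shows "(P has_vector_derivative D) (at x)"
proof -
  have "((\<lambda>s. s + T) has_vector_derivative 1) (at x)"
    by (auto intro!: derivative_eq_intros)
  then have "((P \<circ> (\<lambda>s. s + T)) has_vector_derivative 1 *\<^sub>R D) (at x)"
    using assms(2) by (rule vector_diff_chain_at)
  moreover have "P \<circ> (\<lambda>s. s + T) = P"
    using assms(1) by (simp add: fun_eq_iff)
  ultimately show ?thesis
    by simp
qed

lemma fourier_coeff_second_derivative:
  fixes P P' P'' :: "real \<Rightarrow> complex"
  assumes P': "\<And>y. y \<in> {0..2 * pi} \<Longrightarrow> (P has_vector_derivative P' y) (at y within {0..2 * pi})"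
    and P'': "\<And>y. y \<in> {0..2 * pi} \<Longrightarrow> (P' has_vector_derivative P'' y) (at y within {0..2 * pi})"
    and periodic: "P (2 * pi) = P 0" "P' (2 * pi) = P' 0"
    and coeff: "((\<lambda>y. P y * expi (- m) y) has_integral I) {0..2 * pi}"
  shows "((\<lambda>y. P'' y * expi (- m) y) has_integral - (of_int m ^ 2 * I)) {0..2 * pi}"
proof -
  define R where "R y = (P' y + \<i> * of_int m * P y) * expi (- m) y" for y
  have "(R has_vector_derivative (P'' y + of_int m ^ 2 * P y) * expi (- m) y) (at y within {0..2 * pi})"
    if "y \<in> {0..2 * pi}" for y
  proof -
    have "(R has_vector_derivative (P' y + \<i> * of_int m * P y) * (\<i> * of_int (- m) * expi (- m) y)
        + (P'' y + \<i> * of_int m * P' y) * expi (- m) y) (at y within {0..2 * pi})"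
      unfolding R_def using that
      by (intro has_vector_derivative_mult has_vector_derivative_add has_vector_derivative_mult_right
          P' P'' has_vector_derivative_expi)
    then show ?thesis
      by (simp add: algebra_simps power2_eq_square)
  qed
  then have "((\<lambda>y. (P'' y + of_int m ^ 2 * P y) * expi (- m) y) has_integral R (2 * pi) - R 0) {0..2 * pi}"
    by (intro fundamental_theorem_of_calculus) auto
  moreover have "R (2 * pi) = R 0"
    unfolding R_def periodic expi_2pi by simp
  ultimately have "((\<lambda>y. (P'' y + of_int m ^ 2 * P y) * expi (- m) y) has_integral 0) {0..2 * pi}"
    by simp
  from has_integral_diff[OF this has_integral_mult_right[OF coeff, of "of_int m ^ 2"]]
  show ?thesis
    by (simp add: algebra_simps)
qed

theorem fourier_coeff_of_convergent_trig_series: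
  assumes coeff_bound: "\<And>j. cmod (c j) \<le> B"
    and conv: "\<And>x. (\<lambda>N. \<Sum>n = - int N..int N. c n * expi n x) \<longlonglongrightarrow> f x"
    and cont: "continuous_on UNIV f"
  shows "((\<lambda>x. f x * expi (- m) x) has_integral of_real (2 * pi) * c m) {0..2 * pi}"
proof -
  have two_pi: "0 < 2 * pi" "2 * pi < 8"
    using pi_gt_zero pi_less_4 by simp_all
  obtain D where D: "\<And>y. -1 < y \<Longrightarrow> y < 8 \<Longrightarrow> (riemann_series c has_vector_derivative D y) (at y)"
    and D': "\<And>y. -1 < y \<Longrightarrow> y < 8 \<Longrightarrow> (D has_vector_derivative c 0 - f y) (at y)"
    using riemann_series_twice_differentiable[OF coeff_bound conv cont, of "-1" 8] by auto
  have "(riemann_series c has_vector_derivative D (2 * pi)) (at (0 + 2 * pi))"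
    using D[of "2 * pi"] two_pi by simp
  with riemann_series_periodic[of c B, OF coeff_bound]
  have "(riemann_series c has_vector_derivative D (2 * pi)) (at 0)"
    by (rule has_vector_derivative_periodic)
  then have D_periodic: "D (2 * pi) = D 0"
    using D[of 0] by (simp add: vector_derivative_unique_at)
  obtain I where I: "((\<lambda>y. riemann_series c y * expi (- m) y) has_integral I) {0..2 * pi}"
    and I_eq: "of_int m ^ 2 * I = (if m = 0 then 0 else of_real (2 * pi) * c m)"
    using riemann_series_fourier_integral[of c B m, OF coeff_bound] by blast
  have "((\<lambda>y. (c 0 - f y) * expi (- m) y) has_integral - (of_int m ^ 2 * I)) {0..2 * pi}"
  proof (rule fourier_coeff_second_derivative[OF _ _ _ D_periodic I])
    fix y :: real
    assume "y \<in> {0..2 * pi}"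
    then have "-1 < y" "y < 8"
      using two_pi by auto
    then show "(riemann_series c has_vector_derivative D y) (at y within {0..2 * pi})"
      and "(D has_vector_derivative c 0 - f y) (at y within {0..2 * pi})"
      using D D' has_vector_derivative_at_within by blast+
  next
    show "riemann_series c (2 * pi) = riemann_series c 0"
      using riemann_series_periodic[OF coeff_bound, where y = 0] by simp
  qed
  from has_integral_diff[OF has_integral_mult_right[OF has_integral_expi[of "- m"], of "c 0"] this]
  have "((\<lambda>y. f y * expi (- m) y) has_integral
          c 0 * (if - m = 0 then of_real (2 * pi) else 0) + of_int m ^ 2 * I) {0..2 * pi}"
    by (simp add: algebra_simps)
  moreover have "c 0 * (if - m = 0 then of_real (2 * pi) else 0) + of_int m ^ 2 * I = of_real (2 * pi) * c m"
    unfolding I_eq by simp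
  ultimately show ?thesis
    by simp
qed

section \<open>Fejer sums and best approximation\<close>

lemma convergent_trig_series_periodic:
  assumes conv: "\<And>x. (\<lambda>N. \<Sum>n = - int N..int N. c n * expi n x) \<longlonglongrightarrow> f x"
  shows "f (x + 2 * pi * of_int m) = f x"
  using conv[of "x + 2 * pi * of_int m", unfolded expi_periodic] conv[of x] by (rule LIMSEQ_unique)

lemma bounded_range_of_convergent_trig_series:
  assumes conv: "\<And>x. (\<lambda>N. \<Sum>n = - int N..int N. c n * expi n x) \<longlonglongrightarrow> f x"
    and cont: "continuous_on UNIV f"
  shows "bounded (range f)"
proof -
  have "range f \<subseteq> f ` {0..2 * pi}"
  proof
    fix y
    assume "y \<in> range f"
    then obtain x where "y = f x"
      by blast
    define m where "m = \<lfloor>x / (2 * pi)\<rfloor>"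
    have "of_int m \<le> x / (2 * pi)" "x / (2 * pi) < of_int m + 1"
      unfolding m_def by linarith+
    then have "x - 2 * pi * of_int m \<in> {0..2 * pi}"
      by (simp add: field_simps)
    moreover have "f x = f (x - 2 * pi * of_int m)"
      using convergent_trig_series_periodic[OF conv, of "x - 2 * pi * of_int m" m] by simp
    ultimately show "y \<in> f ` {0..2 * pi}"
      using \<open>y = f x\<close> by blast
  qed
  moreover have "compact (f ` {0..2 * pi})"
    by (rule compact_continuous_image[OF continuous_on_subset[OF cont]]) auto
  ultimately show ?thesis
    using compact_imp_bounded bounded_subset by blast
qed

lemma trig_poly_fourier_coeff_vanish:
  assumes "int n < \<bar>j\<bar>"
  shows "((\<lambda>x. trig_poly n a x * expi (- j) x) has_integral 0) {0..2 * pi}"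
proof -
  have "trig_poly n a x * expi (- j) x = (\<Sum>l = - int n..int n. a l * expi (l - j) x)" for x
    unfolding trig_poly_def sum_distrib_right mult.assoc[of "a _"] expi_mult by (simp only: diff_conv_add_uminus)
  moreover have "(expi (l - j) has_integral 0) {0..2 * pi}" if "l \<in> {- int n..int n}" for l
  proof -
    have "l - j \<noteq> 0"
      using that assms by auto
    then show ?thesis
      using has_integral_expi[of "l - j"] by simp
  qed
  then have "((\<lambda>x. \<Sum>l = - int n..int n. a l * expi (l - j) x) has_integral (\<Sum>l = - int n..int n. a l * 0)) {0..2 * pi}"
    by (intro has_integral_sum has_integral_mult_right) auto
  ultimately show ?thesis
    by simp
qed

lemma has_integral_norm_sum_expi_square:
  "((\<lambda>x. (cmod (\<Sum>b<k. expi (int b) x))^2) has_integral 2 * pi * real k) {0..2 * pi}"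
proof -
  have "complex_of_real ((cmod (\<Sum>b<k. expi (int b) x))^2) = (\<Sum>a<k. \<Sum>b<k. expi (int b - int a) x)" for x
  proof -
    have "complex_of_real ((cmod (\<Sum>b<k. expi (int b) x))^2) = (\<Sum>b<k. expi (int b) x) * cnj (\<Sum>a<k. expi (int a) x)"
      by (rule complex_norm_square)
    also have "\<dots> = (\<Sum>b<k. \<Sum>a<k. expi (int b - int a) x)"
      by (simp only: cnj_sum cnj_expi sum_product expi_mult diff_conv_add_uminus)
    finally show ?thesis
      by (subst sum.swap)
  qed
  moreover have "((\<lambda>x. \<Sum>a<k. \<Sum>b<k. expi (int b - int a) x) has_integral
      (\<Sum>a<k. \<Sum>b<k. if int b - int a = 0 then of_real (2 * pi) else 0)) {0..2 * pi}"
    by (intro has_integral_sum has_integral_expi) auto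
  moreover have "(\<Sum>a<k. \<Sum>b<k. if int b - int a = 0 then complex_of_real (2 * pi) else 0) = of_real (2 * pi * real k)"
    by (simp add: sum.delta)
  ultimately have "((\<lambda>x. complex_of_real ((cmod (\<Sum>b<k. expi (int b) x))^2)) has_integral of_real (2 * pi * real k)) {0..2 * pi}"
    by (simp add: mult_ac)
  from has_integral_linear[OF this bounded_linear_Re] show ?thesis
    by (simp add: o_def)
qed

lemma norm_double_sum_expi:
  "cmod (\<Sum>a<k. \<Sum>b<k. expi (- (p + int a - int b)) x) = (cmod (\<Sum>b<k. expi (int b) x))^2"
proof -
  have combine: "expi (- p) x * (expi (- int a) x * expi (int b) x) = expi (- (p + int a - int b)) x" for a b
  proof -
    have "- p + (- int a + int b) = - (p + int a - int b)"
      by simp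
    then show ?thesis
      by (simp only: expi_mult)
  qed
  have "cnj (\<Sum>a<k. expi (int a) x) * (\<Sum>b<k. expi (int b) x) = (\<Sum>a<k. \<Sum>b<k. expi (- int a) x * expi (int b) x)"
    by (simp only: cnj_sum cnj_expi sum_product)
  then have "(\<Sum>a<k. \<Sum>b<k. expi (- (p + int a - int b)) x)
      = expi (- p) x * (cnj (\<Sum>a<k. expi (int a) x) * (\<Sum>b<k. expi (int b) x))"
    by (simp only: sum_distrib_left combine)
  then show ?thesis
    by (simp only: norm_mult norm_expi complex_mod_cnj power2_eq_square mult_1_left)
qed

lemma norm_fejer_sum_fourier_coeff_le:
  fixes g :: "real \<Rightarrow> complex" and d :: "int \<Rightarrow> complex"
  assumes coeff: "\<And>a b. a < k \<Longrightarrow> b < k \<Longrightarrow>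
      ((\<lambda>x. g x * expi (- (p + int a - int b)) x) has_integral of_real (2 * pi) * d (p + int a - int b)) {0..2 * pi}"
    and bound: "\<And>x. cmod (g x) \<le> M"
  shows "cmod (\<Sum>a<k. \<Sum>b<k. d (p + int a - int b)) \<le> real k * M"
proof -
  define \<Psi> where "\<Psi> x = (\<Sum>a<k. \<Sum>b<k. expi (- (p + int a - int b)) x)" for x
  have I: "((\<lambda>x. g x * \<Psi> x) has_integral of_real (2 * pi) * (\<Sum>a<k. \<Sum>b<k. d (p + int a - int b))) {0..2 * pi}"
    unfolding \<Psi>_def sum_distrib_left by (intro has_integral_sum coeff) auto
  have norm_\<Psi>: "cmod (\<Psi> x) = (cmod (\<Sum>b<k. expi (int b) x))^2" for x
    unfolding \<Psi>_def by (rule norm_double_sum_expi)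
  have I_bound: "((\<lambda>x. M * (cmod (\<Sum>b<k. expi (int b) x))^2) has_integral M * (2 * pi * real k)) {0..2 * pi}"
    by (rule has_integral_mult_right[OF has_integral_norm_sum_expi_square])
  have "cmod (integral {0..2 * pi} (\<lambda>x. g x * \<Psi> x)) \<le> integral {0..2 * pi} (\<lambda>x. M * (cmod (\<Sum>b<k. expi (int b) x))^2)"
  proof (rule integral_norm_bound_integral)
    show "(\<lambda>x. g x * \<Psi> x) integrable_on {0..2 * pi}"
      using I by blast
    show "(\<lambda>x. M * (cmod (\<Sum>b<k. expi (int b) x))^2) integrable_on {0..2 * pi}"
      using I_bound by blast
    fix x
    show "cmod (g x * \<Psi> x) \<le> M * (cmod (\<Sum>b<k. expi (int b) x))^2"
      unfolding norm_mult norm_\<Psi> using bound[of x] by (simp add: mult_right_mono)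
  qed
  then have "cmod (of_real (2 * pi) * (\<Sum>a<k. \<Sum>b<k. d (p + int a - int b))) \<le> M * (2 * pi * real k)"
    unfolding integral_unique[OF I] integral_unique[OF I_bound] .
  then show ?thesis
    by (simp add: norm_mult algebra_simps)
qed

lemma norm_trig_poly_le: "cmod (trig_poly n a x) \<le> (\<Sum>l = - int n..int n. cmod (a l))"
  unfolding trig_poly_def by (rule order.trans[OF norm_sum]) (simp add: norm_mult norm_expi)

lemma norm_fejer_sum_le_best_approx:
  assumes coeff: "\<And>j. ((\<lambda>x. f x * expi (- j) x) has_integral of_real (2 * pi) * c j) {0..2 * pi}"
    and bounded: "bounded (range f)"
    and far: "int n + int k \<le> \<bar>p\<bar>"
  shows "cmod (\<Sum>a<k. \<Sum>b<k. c (p + int a - int b)) \<le> real k * best_approx n f"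
proof (cases "k = 0")
  case False
  obtain Mf where Mf: "\<And>x. cmod (f x) \<le> Mf"
    using bounded unfolding bounded_iff by blast
  have "cmod (\<Sum>a<k. \<Sum>b<k. c (p + int a - int b)) \<le> real k * (SUP x. cmod (f x - trig_poly n t x))" for t
  proof (rule norm_fejer_sum_fourier_coeff_le)
    fix a b
    assume "a < k" "b < k"
    then have "int n < \<bar>p + int a - int b\<bar>"
      using far by auto
    from has_integral_diff[OF coeff trig_poly_fourier_coeff_vanish[OF this, of t]]
    show "((\<lambda>x. (f x - trig_poly n t x) * expi (- (p + int a - int b)) x) has_integral
            of_real (2 * pi) * c (p + int a - int b)) {0..2 * pi}"
      unfolding left_diff_distrib by (simp only: diff_zero)
  next
    fix x
    have "bdd_above (range (\<lambda>x. cmod (f x - trig_poly n t x)))"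
      by (rule bdd_aboveI[of _ "Mf + (\<Sum>l = - int n..int n. cmod (t l))"])
         (auto intro!: order.trans[OF norm_triangle_ineq4] add_mono Mf norm_trig_poly_le)
    then show "cmod (f x - trig_poly n t x) \<le> (SUP x. cmod (f x - trig_poly n t x))"
      by (rule cSUP_upper[rotated]) simp
  qed
  then have "cmod (\<Sum>a<k. \<Sum>b<k. c (p + int a - int b)) / real k \<le> best_approx n f"
    unfolding best_approx_def using False by (intro cInf_greatest) (auto simp: field_simps)
  then show ?thesis
    using False by (simp add: field_simps)
qed simp

section \<open>The decay estimate\<close>

lemma nat_fejer_sums_le:
  fixes c :: "int \<Rightarrow> complex"
  assumes fejer: "\<And>k p. int n + int k \<le> \<bar>p\<bar> \<Longrightarrow> cmod (\<Sum>a<k. \<Sum>b<k. c (p + int a - int b)) \<le> real k * E"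
    and "n + k \<le> p"
  shows "cmod (\<Sum>a<k. \<Sum>b<k. c (int (p + a - b))) \<le> real k * E"
    and "cmod (\<Sum>a<k. \<Sum>b<k. c (int (p + a - b)) + c (- int (p + a - b))) \<le> real k * (2 * E)"
proof -
  have nat_index: "int (p + a - b) = int p + int a - int b" if "b < k" for a b
    using that \<open>n + k \<le> p\<close> by simp
  have pos: "cmod (\<Sum>a<k. \<Sum>b<k. c (int p + int a - int b)) \<le> real k * E"
    and neg: "cmod (\<Sum>a<k. \<Sum>b<k. c (- int p + int a - int b)) \<le> real k * E"
    using fejer[of k "int p"] fejer[of k "- int p"] \<open>n + k \<le> p\<close> by simp_all
  moreover have "(\<Sum>a<k. \<Sum>b<k. c (int (p + a - b))) = (\<Sum>a<k. \<Sum>b<k. c (int p + int a - int b))"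
    by (intro sum.cong refl) (simp add: nat_index)
  ultimately show "cmod (\<Sum>a<k. \<Sum>b<k. c (int (p + a - b))) \<le> real k * E"
    by simp
  have "(\<Sum>a<k. \<Sum>b<k. c (int (p + a - b)) + c (- int (p + a - b)))
      = (\<Sum>a<k. \<Sum>b<k. c (int p + int a - int b)) + (\<Sum>a<k. \<Sum>b<k. c (- (int p + int a - int b)))"
    unfolding sum.distrib[symmetric] by (intro sum.cong refl) (simp add: nat_index)
  also have "(\<Sum>a<k. \<Sum>b<k. c (- (int p + int a - int b))) = (\<Sum>b<k. \<Sum>a<k. c (- (int p + int a - int b)))"
    by (rule sum.swap)
  also have "\<dots> = (\<Sum>a<k. \<Sum>b<k. c (- int p + int a - int b))"
    by (simp add: algebra_simps)
  finally show "cmod (\<Sum>a<k. \<Sum>b<k. c (int (p + a - b)) + c (- int (p + a - b))) \<le> real k * (2 * E)"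
    using norm_triangle_ineq[of "\<Sum>a<k. \<Sum>b<k. c (int p + int a - int b)"
        "\<Sum>a<k. \<Sum>b<k. c (- int p + int a - int b)"] pos neg by simp
qed

lemma coeff_decay_of_fejer_bounds:
  fixes c :: "int \<Rightarrow> complex" and E :: "nat \<Rightarrow> real"
  assumes nbvs: "NBVS (\<lambda>n. c (int n))" "NBVS (\<lambda>n. c (int n) + c (- int n))"
    and fejer: "\<And>n k p. int n + int k \<le> \<bar>p\<bar> \<Longrightarrow> cmod (\<Sum>a<k. \<Sum>b<k. c (p + int a - int b)) \<le> real k * E n"
  shows "\<exists>K. \<forall>n\<ge>1. \<forall>k\<ge>1. real k * cmod (c (int n + int k)) \<le> K * E n \<and>
                          real k * cmod (c (- int n - int k)) \<le> K * E n"
proof -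
  have pos_sums: "cmod (\<Sum>a<k. \<Sum>b<k. c (int (p + a - b))) \<le> real k * E n"
    and sym_sums: "cmod (\<Sum>a<k. \<Sum>b<k. c (int (p + a - b)) + c (- int (p + a - b))) \<le> real k * (2 * E n)"
    if "1 \<le> n" "1 \<le> k" "n + k \<le> p" for n k p
    using nat_fejer_sums_le[OF fejer that(3)] by blast+
  obtain C1 where C1: "\<And>n k. 1 \<le> n \<Longrightarrow> 1 \<le> k \<Longrightarrow> real k * cmod (c (int (n + k))) \<le> C1 * E n"
    using NBVS_norm_le_of_fejer_sums[where E = E, OF nbvs(1) pos_sums] by metis
  obtain C2 where "0 \<le> C2" and C2: "\<And>n k. 1 \<le> n \<Longrightarrow> 1 \<le> k \<Longrightarrow>
      real k * cmod (c (int (n + k)) + c (- int (n + k))) \<le> C2 * (2 * E n)"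
    using NBVS_norm_le_of_fejer_sums[where E = "\<lambda>n. 2 * E n", OF nbvs(2) sym_sums] by metis
  have "cmod (c (int (n + 1))) \<le> E n" for n
    using fejer[of n 1 "int (n + 1)"] by simp
  then have E_nonneg: "0 \<le> E n" for n
    using norm_ge_zero order.trans by blast
  show ?thesis
  proof (intro exI[of _ "C1 + 2 * C2"] allI impI conjI)
    fix n k :: nat
    assume "1 \<le> n" "1 \<le> k"
    then have pos: "real k * cmod (c (int (n + k))) \<le> C1 * E n"
      and sym: "real k * cmod (c (int (n + k)) + c (- int (n + k))) \<le> C2 * (2 * E n)"
      using C1 C2 by blast+
    have split: "(C1 + 2 * C2) * E n = C1 * E n + C2 * (2 * E n)"
      by (simp add: algebra_simps)
    show "real k * cmod (c (int n + int k)) \<le> (C1 + 2 * C2) * E n"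
      using pos mult_nonneg_nonneg[OF \<open>0 \<le> C2\<close> E_nonneg[of n]] unfolding split by simp
    have "cmod (c (- int n - int k)) \<le> cmod (c (int (n + k)) + c (- int (n + k))) + cmod (c (int (n + k)))"
      using norm_triangle_ineq4[of "c (int (n + k)) + c (- int (n + k))" "c (int (n + k))"] by simp
    then have "real k * cmod (c (- int n - int k))
        \<le> real k * cmod (c (int (n + k)) + c (- int (n + k))) + real k * cmod (c (int (n + k)))"
      by (simp add: mult_left_mono flip: distrib_left)
    then show "real k * cmod (c (- int n - int k)) \<le> (C1 + 2 * C2) * E n"
      using pos sym unfolding split by linarith
  qed
qed

theorem lemma3:
  fixes c :: "int \<Rightarrow> complex" and f :: "real \<Rightarrow> complex"
  assumes "NBVS (\<lambda>n. c (int n))"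
    and "NBVS (\<lambda>n. c (int n) + c (- int n))"
    and "\<And>x. (\<lambda>N. \<Sum>n = - int N..int N. c n * exp (\<i> * of_int n * of_real x)) \<longlonglongrightarrow> f x"
    and "continuous_on UNIV f"
  shows "\<exists>K. \<forall>n\<ge>1. \<forall>k\<ge>1.
           real k * cmod (c (int n + int k)) \<le> K * best_approx n f \<and>
           real k * cmod (c (- int n - int k)) \<le> K * best_approx n f"
proof (rule coeff_decay_of_fejer_bounds[OF assms(1,2)])
  obtain B where "\<And>j. cmod (c j) \<le> B"
    using bounded_coeffs_of_convergent_trig_series[OF assms(1,3)] by blast
  from fourier_coeff_of_convergent_trig_series[OF this assms(3,4)]
  show "cmod (\<Sum>a<k. \<Sum>b<k. c (p + int a - int b)) \<le> real k * best_approx n f"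
    if "int n + int k \<le> \<bar>p\<bar>" for n k p
    using norm_fejer_sum_le_best_approx bounded_range_of_convergent_trig_series[OF assms(3,4)] that by blast
qed

end
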